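(* Let $A$ be a unital C*-algebra, $\mathcal H$ a finitely or countably generated Hilbert $A$-module, and $\{x_j : j\in\mathbb J\}$ a standard frame of $\mathcal H$. Assume that this frame is (standard) normalized tight with respect to two $A$-valued inner products $\langle\cdot,\cdot\rangle_1$ and $\langle\cdot,\cdot\rangle_2$ on $\mathcal H$, each inducing a norm equivalent to the given one. Then $\langle x,y\rangle_1=\langle x,y\rangle_2$ for all $x,y\in\mathcal H$.
   Context: A (left) Hilbert $A$-module is a left $A$-module $\mathcal H$ with an $A$-valued inner product $\langle\cdot,\cdot\rangle$, $A$-linear in the first argument, with $\langle x,y\rangle=\langle y,x\rangle^*$, $\langle x,x\rangle\ge0$ and $=0$ only for $x=0$, complete in $\|x\|=\|\langle x,x\rangle\|^{1/2}$. Finitely generated: every element is an $A$-linear combination of finitely many fixed elements; countably generated: some countable subset has norm-dense $A$-linear span. A sequence $\{x_j:j\in\mathbb J\}$ ($\mathbb J$ finite or countable) is a frame with respect to an inner product $\langle\cdot,\cdot\rangle$ if there are $C,D>0$ with $C\langle x,x\rangle\le\sum_j\langle x,x_j\rangle\langle x_j,x\rangle\le D\langle x,x\rangle$ for all $x$; normalized tight if $\langle x,x\rangle=\sum_j\langle x,x_j\rangle\langle x_j,x\rangle$ for all $x$; standard if this series converges in norm for all $x$. *)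

theory Defs
  imports Complex_Main "HOL-Library.Countable_Set"
begin

text \<open>A unital complex C*-algebra: the carrier type is a real unital Banach algebra,
  equipped with a complex scalar multiplication sc (extending the real one, compatible
  with the norm and the product) and an involution st satisfying the C*-identity.\<close>
definition cstar_alg :: "(complex \<Rightarrow> 'a::{real_normed_algebra_1,banach} \<Rightarrow> 'a) \<Rightarrow> ('a \<Rightarrow> 'a) \<Rightarrow> bool" where
  "cstar_alg sc st \<longleftrightarrow>
     (\<forall>c a b. sc c (a + b) = sc c a + sc c b) \<and>
     (\<forall>c d a. sc (c + d) a = sc c a + sc d a) \<and>
     (\<forall>c d a. sc c (sc d a) = sc (c * d) a) \<and>
     (\<forall>r a. sc (complex_of_real r) a = r *\<^sub>R a) \<and>
     (\<forall>c a. norm (sc c a) = cmod c * norm a) \<and>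
     (\<forall>c a b. sc c (a * b) = sc c a * b \<and> sc c (a * b) = a * sc c b) \<and>
     (\<forall>a b. st (a + b) = st a + st b) \<and>
     (\<forall>c a. st (sc c a) = sc (cnj c) (st a)) \<and>
     (\<forall>a b. st (a * b) = st b * st a) \<and>
     (\<forall>a. st (st a) = a) \<and>
     (\<forall>a. norm (st a * a) = (norm a)\<^sup>2)"

definition cpositive :: "('a::ring \<Rightarrow> 'a) \<Rightarrow> 'a \<Rightarrow> bool" where
  "cpositive st a \<longleftrightarrow> (\<exists>b. a = st b * b)"

definition cle :: "('a::ring \<Rightarrow> 'a) \<Rightarrow> 'a \<Rightarrow> 'a \<Rightarrow> bool" where
  "cle st a b \<longleftrightarrow> cpositive st (b - a)"

definition left_module :: "('a::ring_1 \<Rightarrow> 'm::ab_group_add \<Rightarrow> 'm) \<Rightarrow> bool" where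
  "left_module smult \<longleftrightarrow>
     (\<forall>a x y. smult a (x + y) = smult a x + smult a y) \<and>
     (\<forall>a b x. smult (a + b) x = smult a x + smult b x) \<and>
     (\<forall>a b x. smult (a * b) x = smult a (smult b x)) \<and>
     (\<forall>x. smult 1 x = x)"

definition A_inner_product :: "('a::ring \<Rightarrow> 'a) \<Rightarrow> ('a \<Rightarrow> 'm::ab_group_add \<Rightarrow> 'm) \<Rightarrow> ('m \<Rightarrow> 'm \<Rightarrow> 'a) \<Rightarrow> bool" where
  "A_inner_product st smult ip \<longleftrightarrow>
     (\<forall>a x y z. ip (smult a x + y) z = a * ip x z + ip y z) \<and>
     (\<forall>x y. ip x y = st (ip y x)) \<and>
     (\<forall>x. cpositive st (ip x x)) \<and>
     (\<forall>x. ip x x = 0 \<longrightarrow> x = 0)"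

definition ipnorm :: "('m \<Rightarrow> 'm \<Rightarrow> 'a::real_normed_vector) \<Rightarrow> 'm \<Rightarrow> real" where
  "ipnorm ip x = sqrt (norm (ip x x))"

definition ip_complete :: "('m::ab_group_add \<Rightarrow> 'm \<Rightarrow> 'a::real_normed_vector) \<Rightarrow> bool" where
  "ip_complete ip \<longleftrightarrow>
     (\<forall>f :: nat \<Rightarrow> 'm. (\<forall>e>0. \<exists>N. \<forall>m\<ge>N. \<forall>n\<ge>N. ipnorm ip (f m - f n) < e) \<longrightarrow>
        (\<exists>l. (\<lambda>n. ipnorm ip (f n - l)) \<longlonglongrightarrow> 0))"

definition hilbert_module ::
  "(complex \<Rightarrow> 'a::{real_normed_algebra_1,banach} \<Rightarrow> 'a) \<Rightarrow> ('a \<Rightarrow> 'a) \<Rightarrow> ('a \<Rightarrow> 'm::ab_group_add \<Rightarrow> 'm) \<Rightarrow> ('m \<Rightarrow> 'm \<Rightarrow> 'a) \<Rightarrow> bool" where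
  "hilbert_module sc st smult ip \<longleftrightarrow>
     cstar_alg sc st \<and> left_module smult \<and> A_inner_product st smult ip \<and> ip_complete ip"

definition A_span :: "('a \<Rightarrow> 'm::ab_group_add \<Rightarrow> 'm) \<Rightarrow> 'm set \<Rightarrow> 'm set" where
  "A_span smult G = {x. \<exists>F a. finite F \<and> F \<subseteq> G \<and> x = (\<Sum>g\<in>F. smult (a g) g)}"

definition finitely_generated :: "('a \<Rightarrow> 'm::ab_group_add \<Rightarrow> 'm) \<Rightarrow> bool" where
  "finitely_generated smult \<longleftrightarrow> (\<exists>G. finite G \<and> A_span smult G = UNIV)"

definition countably_generated :: "('a \<Rightarrow> 'm::ab_group_add \<Rightarrow> 'm) \<Rightarrow> ('m \<Rightarrow> 'm \<Rightarrow> 'a::real_normed_vector) \<Rightarrow> bool" where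
  "countably_generated smult ip \<longleftrightarrow>
     (\<exists>G. countable G \<and> (\<forall>x e. e > 0 \<longrightarrow> (\<exists>y\<in>A_span smult G. ipnorm ip (x - y) < e)))"

definition frame_psum :: "('m \<Rightarrow> 'm \<Rightarrow> 'a::ring) \<Rightarrow> nat set \<Rightarrow> (nat \<Rightarrow> 'm) \<Rightarrow> 'm \<Rightarrow> nat \<Rightarrow> 'a" where
  "frame_psum ip J xs x n = (\<Sum>j\<in>J \<inter> {..<n}. ip x (xs j) * ip (xs j) x)"

definition standard_frame :: "('a::{real_normed_algebra_1,banach} \<Rightarrow> 'a) \<Rightarrow> ('m \<Rightarrow> 'm \<Rightarrow> 'a) \<Rightarrow> nat set \<Rightarrow> (nat \<Rightarrow> 'm) \<Rightarrow> bool" where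
  "standard_frame st ip J xs \<longleftrightarrow>
     (\<exists>C D. C > 0 \<and> D > 0 \<and>
        (\<forall>x. \<exists>s. frame_psum ip J xs x \<longlonglongrightarrow> s \<and>
               cle st (C *\<^sub>R ip x x) s \<and> cle st s (D *\<^sub>R ip x x)))"

definition standard_nt_frame :: "('m \<Rightarrow> 'm \<Rightarrow> 'a::{real_normed_algebra_1,banach}) \<Rightarrow> nat set \<Rightarrow> (nat \<Rightarrow> 'm) \<Rightarrow> bool" where
  "standard_nt_frame ip J xs \<longleftrightarrow> (\<forall>x. frame_psum ip J xs x \<longlonglongrightarrow> ip x x)"

definition equiv_norms :: "('m \<Rightarrow> 'm \<Rightarrow> 'a::real_normed_vector) \<Rightarrow> ('m \<Rightarrow> 'm \<Rightarrow> 'a) \<Rightarrow> bool" where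
  "equiv_norms ip ip' \<longleftrightarrow>
     (\<exists>c d. c > 0 \<and> d > 0 \<and> (\<forall>x. c * ipnorm ip x \<le> ipnorm ip' x \<and> ipnorm ip' x \<le> d * ipnorm ip x))"

end

(* Since the frame is normalized tight for the complete inner product <.,.>1, it reconstructs
   every x as x = sum_j <x,x_j>1 x_j, with convergence in the norm of <.,.>1. That norm is
   equivalent to the norm of <.,.>2, so <.,.>2 is continuous for it and
   <x,x>2 = sum_j <x,x_j>1 <x_j,x>2. Exchanging the roles of the two inner products and
   applying the involution, the same series also converges to <x,x>1. Hence both inner
   products agree on the diagonal, and by polarization everywhere.

   Convergence of the reconstruction series needs the order structure of A: the
   Cauchy-Schwarz inequality |sum u_j c_j*|^2 <= |sum u_j u_j*| |sum c_j c_j*| and the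
   monotonicity of the norm on positive elements. Positivity is taken spectrally, and the key
   facts are that self-adjoint elements have spectral radius equal to their norm, that
   positive elements have positive square roots (binomial series), and that every a* a is
   positive. *)

theory Submission
  imports Defs "HOL-Analysis.Analysis" "HOL-Computational_Algebra.Formal_Power_Series"
begin

section \<open>Invertible elements of Banach algebras\<close>

definition is_invertible :: "'a::ring_1 \<Rightarrow> bool" where
  "is_invertible a \<longleftrightarrow> (\<exists>b. a * b = 1 \<and> b * a = 1)"

definition inverse_of :: "'a::ring_1 \<Rightarrow> 'a" where
  "inverse_of a = (SOME b. a * b = 1 \<and> b * a = 1)"

lemma inverse_of_right [simp]: "is_invertible a \<Longrightarrow> a * inverse_of a = 1"
  and inverse_of_left [simp]: "is_invertible a \<Longrightarrow> inverse_of a * a = 1"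
  unfolding is_invertible_def inverse_of_def by (metis (mono_tags, lifting) someI_ex)+

lemma is_invertibleI: "a * b = 1 \<Longrightarrow> b * a = 1 \<Longrightarrow> is_invertible a"
  unfolding is_invertible_def by blast

lemma inverse_of_eq:
  assumes "a * b = 1" "b * a = 1" shows "inverse_of a = b"
proof -
  have "inverse_of a = inverse_of a * (a * b)" using assms by simp
  also have "\<dots> = b" using is_invertibleI[OF assms] by (simp flip: mult.assoc)
  finally show ?thesis .
qed

lemma is_invertible_mult:
  assumes "is_invertible a" "is_invertible b" shows "is_invertible (a * b)"
proof (rule is_invertibleI)
  show "(a * b) * (inverse_of b * inverse_of a) = 1"
    by (metis assms inverse_of_right mult.assoc mult_1_left)
  show "(inverse_of b * inverse_of a) * (a * b) = 1"
    by (metis assms inverse_of_left mult.assoc mult_1_left)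
qed

lemma is_invertible_minus: "is_invertible a \<Longrightarrow> is_invertible (- a)"
  unfolding is_invertible_def by (metis minus_mult_minus)

lemma inverse_of_commute:
  assumes "is_invertible a" "x * a = a * x" shows "x * inverse_of a = inverse_of a * x"
proof -
  have "x * inverse_of a = inverse_of a * a * x * inverse_of a" using assms by simp
  also have "\<dots> = inverse_of a * x * (a * inverse_of a)" using assms(2) by (metis mult.assoc)
  finally show ?thesis using assms by simp
qed

lemma one_minus_mult_geometric_sum:
  fixes z :: "'a::ring_1"
  shows "(1 - z) * (\<Sum>m<n. z ^ m) = 1 - z ^ n" "(\<Sum>m<n. z ^ m) * (1 - z) = 1 - z ^ n"
proof -
  have tele: "(\<Sum>m<n. z ^ m - z ^ Suc m) = 1 - z ^ n"
    using sum_lessThan_telescope'[of "\<lambda>m. z ^ m" n] by simp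
  show "(1 - z) * (\<Sum>m<n. z ^ m) = 1 - z ^ n"
    unfolding tele[symmetric] by (simp add: sum_distrib_left left_diff_distrib sum_subtractf)
  show "(\<Sum>m<n. z ^ m) * (1 - z) = 1 - z ^ n"
    unfolding tele[symmetric] by (simp add: sum_distrib_right right_diff_distrib sum_subtractf power_commutes)
qed

lemma neumann_series:
  fixes y :: "'a::{real_normed_algebra_1,banach}"
  assumes "norm y < 1"
  shows "is_invertible (1 - y)" "norm (inverse_of (1 - y) - 1) \<le> norm y / (1 - norm y)"
proof -
  have sg: "summable (\<lambda>n. norm y ^ n)" using assms by (simp add: summable_geometric)
  have sn: "summable (\<lambda>n. norm (y ^ n))"
    by (rule summable_comparison_test[OF _ sg]) (auto simp: norm_power_ineq)
  hence s: "summable (\<lambda>n. y ^ n)" by (rule summable_norm_cancel)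
  define S where "S = (\<Sum>n. y ^ n)"
  have tele: "(\<lambda>n. y ^ n - y ^ Suc n) sums 1"
    using telescope_sums'[OF summable_LIMSEQ_zero[OF s]] by simp
  have "(\<lambda>n. (1 - y) * y ^ n) sums ((1 - y) * S)"
    unfolding S_def by (rule summable_sums[THEN sums_mult, OF s])
  hence l: "(1 - y) * S = 1"
    using tele sums_unique2 by (fastforce simp: algebra_simps)
  have "(\<lambda>n. y ^ n * (1 - y)) sums (S * (1 - y))"
    unfolding S_def by (rule summable_sums[THEN sums_mult2, OF s])
  hence r: "S * (1 - y) = 1"
    using tele sums_unique2 by (fastforce simp: algebra_simps power_commutes)
  show "is_invertible (1 - y)" using l r by (rule is_invertibleI)
  have "norm S \<le> (\<Sum>n. norm y ^ n)"
    unfolding S_def by (rule order_trans[OF summable_norm[OF sn] suminf_le[OF norm_power_ineq sn sg]])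
  also have "\<dots> = 1 / (1 - norm y)" using assms by (simp add: suminf_geometric)
  finally have nS: "norm S \<le> 1 / (1 - norm y)" .
  have "S - 1 = y * S" using l by (simp add: algebra_simps)
  hence "norm (S - 1) \<le> norm y * norm S" by (simp add: norm_mult_ineq)
  also have "\<dots> \<le> norm y / (1 - norm y)"
    using mult_left_mono[OF nS] by simp
  finally show "norm (inverse_of (1 - y) - 1) \<le> norm y / (1 - norm y)"
    using inverse_of_eq[OF l r] by simp
qed

lemma norm_less_one_if_inverse_of_one_minus_close:
  fixes y z :: "'a::{real_normed_algebra_1,banach}"
  assumes y: "is_invertible (1 - y)" and z: "norm z < 1/10"
    and close: "norm (inverse_of (1 - z) - inverse_of (1 - y)) \<le> 1/4"
  shows "norm y < 1"
proof -
  have "norm (inverse_of (1 - z) - 1) \<le> norm z / (1 - norm z)"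
    using z by (intro neumann_series(2)) simp
  also have "\<dots> \<le> 1/9" using z by (simp add: divide_le_eq)
  finally have "norm (1 - inverse_of (1 - y)) < 1/2"
    using close norm_triangle_ineq4[of "inverse_of (1 - z) - inverse_of (1 - y)" "inverse_of (1 - z) - 1"]
    by (simp add: norm_minus_commute)
  \<comment> \<open>so \<open>1 - y\<close> is itself the inverse of an element within \<open>1/2\<close> of \<open>1\<close>\<close>
  moreover have "inverse_of (1 - (1 - inverse_of (1 - y))) = 1 - y"
    using y by (intro inverse_of_eq) simp_all
  ultimately have "norm y \<le> norm (1 - inverse_of (1 - y)) / (1 - norm (1 - inverse_of (1 - y)))"
    using neumann_series(2)[of "1 - inverse_of (1 - y)"] by (simp add: norm_minus_commute)
  also have "\<dots> < 1" using \<open>norm (1 - inverse_of (1 - y)) < 1/2\<close> by (simp add: divide_less_eq)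
  finally show ?thesis .
qed

lemma norm_inverse_of_add_diff_le:
  fixes a e :: "'a::{real_normed_algebra_1,banach}"
  assumes a: "is_invertible a" and small: "norm (inverse_of a) * norm e \<le> 1/2"
  shows "norm (inverse_of (a + e) - inverse_of a) \<le> 2 * (norm (inverse_of a))\<^sup>2 * norm e"
proof -
  let ?b = "inverse_of a"
  have nbe: "norm (?b * e) \<le> 1/2" using norm_mult_ineq[of ?b e] small by linarith
  note N = neumann_series[of "- (?b * e)"]
  let ?N = "inverse_of (1 - - (?b * e))"
  have fac: "a + e = a * (1 - - (?b * e))" "1 - - (?b * e) = ?b * (a + e)"
    using a by (simp_all add: algebra_simps flip: mult.assoc)
  have "(a + e) * (?N * ?b) = a * ((1 - - (?b * e)) * ?N) * ?b"
    unfolding fac(1) by (simp add: mult.assoc)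
  hence r: "(a + e) * (?N * ?b) = 1"
    using N(1) nbe a by simp
  have l: "(?N * ?b) * (a + e) = 1"
    using N(1) nbe by (simp add: mult.assoc flip: fac(2))
  have "inverse_of (a + e) - ?b = (?N - 1) * ?b" using inverse_of_eq[OF r l] by (simp add: algebra_simps)
  hence "norm (inverse_of (a + e) - ?b) \<le> norm (?N - 1) * norm ?b" by (simp add: norm_mult_ineq)
  also have "\<dots> \<le> (norm (?b * e) / (1 - norm (?b * e))) * norm ?b"
    using N(2) nbe by (intro mult_right_mono) auto
  also have "\<dots> \<le> (2 * norm (?b * e)) * norm ?b"
    using nbe mult_nonneg_nonneg[of "norm (?b * e)" "1 - 2 * norm (?b * e)"]
    by (intro mult_right_mono) (auto simp: divide_le_eq algebra_simps)
  also have "\<dots> \<le> 2 * (norm ?b)\<^sup>2 * norm e"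
    using mult_left_mono[OF norm_mult_ineq[of ?b e], of "2 * norm ?b"]
    by (simp add: power2_eq_square algebra_simps)
  finally show ?thesis .
qed

lemma tendsto_inverse_of:
  fixes f :: "'b \<Rightarrow> 'a::{real_normed_algebra_1,banach}"
  assumes f: "(f \<longlongrightarrow> a) F" and a: "is_invertible a"
  shows "((\<lambda>x. inverse_of (f x)) \<longlongrightarrow> inverse_of a) F"
proof -
  let ?b = "inverse_of a"
  define B where "B = norm ?b + 1"
  have B: "B > 0" "norm ?b \<le> B" unfolding B_def using norm_ge_zero[of ?b] by linarith+
  have e0: "((\<lambda>x. f x - a) \<longlongrightarrow> 0) F" using f by (simp add: LIM_zero)
  have "eventually (\<lambda>x. norm (f x - a) < 1 / (2 * B)) F"
    using B by (intro order_tendstoD(2)[OF tendsto_norm_zero[OF e0]]) simp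
  hence ev: "eventually (\<lambda>x. norm (inverse_of (f x) - ?b) \<le> 2 * (norm ?b)\<^sup>2 * norm (f x - a)) F"
  proof (rule eventually_mono)
    fix x assume x: "norm (f x - a) < 1 / (2 * B)"
    have "norm ?b * norm (f x - a) \<le> B * (1 / (2 * B))"
      using x B by (intro mult_mono) auto
    hence "norm ?b * norm (f x - a) \<le> 1/2" using B by simp
    from norm_inverse_of_add_diff_le[OF a this]
    show "norm (inverse_of (f x) - ?b) \<le> 2 * (norm ?b)\<^sup>2 * norm (f x - a)" by simp
  qed
  have "((\<lambda>x. 2 * (norm ?b)\<^sup>2 * norm (f x - a)) \<longlongrightarrow> 0) F"
    using tendsto_mult_right_zero[OF tendsto_norm_zero[OF e0]] by simp
  hence "((\<lambda>x. inverse_of (f x) - ?b) \<longlongrightarrow> 0) F"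
    by (rule Lim_null_comparison[OF ev])
  thus ?thesis by (simp add: LIM_zero_iff)
qed

lemma is_invertible_of_real_minus_mult_swap:
  fixes a b :: "'a::real_algebra_1"
  assumes m: "\<mu> \<noteq> 0" and i: "is_invertible (of_real \<mu> - a * b)"
  shows "is_invertible (of_real \<mu> - b * a)"
proof (rule is_invertibleI)
  define c where "c = inverse_of (of_real \<mu> - a * b)"
  \<comment> \<open>\<open>(\<mu> - b a)\<^sup>-\<^sup>1 = \<mu>\<^sup>-\<^sup>1 (1 + b (\<mu> - a b)\<^sup>-\<^sup>1 a)\<close>\<close>
  define d where "d = (1 / \<mu>) *\<^sub>R (1 + b * c * a)"
  have c1: "(of_real \<mu> - a * b) * c = 1" "c * (of_real \<mu> - a * b) = 1"
    using i unfolding c_def by simp_all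
  have m1: "(1 / \<mu>) *\<^sub>R (of_real \<mu> :: 'a) = 1" using m by (simp add: of_real_def)
  have "(of_real \<mu> - b * a) * (b * c * a) = b * ((of_real \<mu> - a * b) * c) * a"
    by (simp add: algebra_simps mult.assoc of_real_def)
  hence "(of_real \<mu> - b * a) * (1 + b * c * a) = of_real \<mu>"
    using c1 by (simp add: distrib_left)
  thus "(of_real \<mu> - b * a) * d = 1" unfolding d_def using m1 by simp
  have "(b * c * a) * (of_real \<mu> - b * a) = b * (c * (of_real \<mu> - a * b)) * a"
    by (simp add: algebra_simps mult.assoc of_real_def)
  hence "(1 + b * c * a) * (of_real \<mu> - b * a) = of_real \<mu>"
    using c1 by (simp add: distrib_right)
  thus "d * (of_real \<mu> - b * a) = 1" unfolding d_def using m1 by simp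
qed

lemma sum_roots_of_unity_power:
  assumes n: "n > 0" and m: "0 < m" "m < n"
  shows "(\<Sum>k<n. (exp (2 * pi * \<i> / of_nat n) ^ m) ^ k) = 0"
proof -
  let ?w = "exp (2 * pi * \<i> / of_nat n) ^ m"
  have w: "?w = exp (2 * pi * \<i> * of_nat m / of_nat n)"
    by (simp add: field_simps flip: exp_of_nat_mult)
  have "?w ^ n = exp (of_nat n * (2 * pi * \<i> * of_nat m / of_nat n))"
    unfolding w by (simp only: exp_of_nat_mult)
  also have "\<dots> = exp (of_int (2 * int m) * pi * \<i>)" using n by (simp add: field_simps)
  also have "\<dots> = 1" unfolding exp_eq_1 by (auto intro!: exI[of _ "int m"])
  finally have wn: "?w ^ n = 1" .
  have "?w \<noteq> 1"
  proof
    assume "?w = 1"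
    then obtain k :: int where k: "2 * pi * real m / real n = of_int (2 * k) * pi"
      unfolding w exp_eq_1 by auto
    have "real m / real n = (2 * pi * real m / real n) / (2 * pi)" by simp
    hence "real m / real n = of_int k" unfolding k by simp
    moreover have "0 < real m / real n" "real m / real n < 1" using m n by auto
    ultimately show False by auto
  qed
  thus ?thesis using geometric_sum[of ?w n] wn by simp
qed

section \<open>C*-algebras\<close>

locale cstar_algebra =
  fixes sc :: "complex \<Rightarrow> 'a::{real_normed_algebra_1,banach} \<Rightarrow> 'a"
    and st :: "'a \<Rightarrow> 'a"
  assumes cstar_alg: "cstar_alg sc st"
begin

lemma sc_add_left: "sc (c + d) a = sc c a + sc d a"
  and sc_sc: "sc c (sc d a) = sc (c * d) a"
  and sc_of_real: "sc (complex_of_real r) a = r *\<^sub>R a"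
  and norm_sc: "norm (sc c a) = cmod c * norm a"
  and sc_mult_left: "sc c (a * b) = sc c a * b"
  and st_add: "st (a + b) = st a + st b"
  and st_sc: "st (sc c a) = sc (cnj c) (st a)"
  and st_mult: "st (a * b) = st b * st a"
  and st_st [simp]: "st (st a) = a"
  and norm_st_mult_self: "norm (st a * a) = (norm a)\<^sup>2"
  using cstar_alg by (simp_all add: cstar_alg_def)

lemma sc_mult_right: "sc c (a * b) = a * sc c b"
  using cstar_alg unfolding cstar_alg_def by blast

definition of_complex :: "complex \<Rightarrow> 'a" where
  "of_complex c = sc c 1"

lemma sc_eq_of_complex_mult: "sc c a = of_complex c * a"
  by (metis of_complex_def mult_1 sc_mult_left)

lemma of_complex_commute: "of_complex c * a = a * of_complex c"
  by (metis of_complex_def mult_1 mult_1_right sc_mult_left sc_mult_right)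

lemma of_complex_add: "of_complex (c + d) = of_complex c + of_complex d"
  by (simp add: of_complex_def sc_add_left)

lemma of_complex_mult: "of_complex (c * d) = of_complex c * of_complex d"
  by (metis of_complex_def sc_eq_of_complex_mult sc_sc)

lemma of_complex_of_real: "of_complex (complex_of_real r) = of_real r"
  unfolding of_complex_def sc_of_real by (simp add: of_real_def)

lemma of_complex_1 [simp]: "of_complex 1 = 1"
  and of_complex_0 [simp]: "of_complex 0 = 0"
  using of_complex_of_real[of 1] of_complex_of_real[of 0] by simp_all

lemma norm_of_complex [simp]: "norm (of_complex c) = cmod c"
  by (simp add: of_complex_def norm_sc)

lemma of_complex_minus: "of_complex (- c) = - of_complex c"
  by (metis add.right_inverse add_eq_0_iff of_complex_0 of_complex_add)

lemma of_complex_sum: "of_complex (sum f A) = (\<Sum>x\<in>A. of_complex (f x))"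
  by (induction A rule: infinite_finite_induct) (auto simp: of_complex_add)

lemma of_complex_of_nat: "of_complex (of_nat n) = of_nat n"
  using of_complex_of_real[of "of_nat n"] by simp

lemma of_complex_i_squared: "of_complex \<i> * of_complex \<i> = -1"
  by (simp flip: of_complex_mult add: of_complex_minus)

lemma power_of_complex_mult: "(of_complex c * y) ^ n = of_complex (c ^ n) * y ^ n"
proof (induction n)
  case (Suc n)
  have "(of_complex c * y) ^ Suc n = of_complex c * y * (of_complex (c ^ n) * y ^ n)"
    using Suc by simp
  also have "\<dots> = of_complex c * of_complex (c ^ n) * (y * y ^ n)"
    by (metis of_complex_commute mult.assoc)
  finally show ?case by (simp add: of_complex_mult)
qed simp

lemma bounded_linear_of_complex: "bounded_linear of_complex"
  by (rule bounded_linear_intro[where K=1])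
    (simp_all add: of_complex_add scaleR_conv_of_real of_complex_mult of_complex_of_real)

lemma is_invertible_of_complex: "c \<noteq> 0 \<Longrightarrow> is_invertible (of_complex c)"
  by (rule is_invertibleI[of _ "of_complex (inverse c)"]) (simp_all flip: of_complex_mult)

lemma st_0 [simp]: "st 0 = 0"
  by (metis add_cancel_right_right st_add)

lemma st_minus: "st (- a) = - st a"
  by (metis add.right_inverse add_eq_0_iff st_0 st_add)

lemma st_diff: "st (a - b) = st a - st b"
  by (metis diff_conv_add_uminus st_add st_minus)

lemma st_1 [simp]: "st 1 = 1"
  by (metis mult_1_right st_mult st_st)

lemma st_of_complex: "st (of_complex c) = of_complex (cnj c)"
  by (simp add: of_complex_def st_sc)

lemma st_scaleR: "st (r *\<^sub>R a) = r *\<^sub>R st a"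
  by (metis complex_cnj_complex_of_real sc_of_real st_sc)

lemma st_of_real: "st (of_real r) = of_real r"
  by (simp add: of_real_def st_scaleR)

lemma st_sum: "st (sum f A) = (\<Sum>x\<in>A. st (f x))"
  by (induction A rule: infinite_finite_induct) (auto simp: st_add)

lemma st_power: "st (a ^ n) = st a ^ n"
  by (induction n) (auto simp: st_mult power_commutes)

lemma norm_st [simp]: "norm (st a) = norm a"
proof -
  have le: "norm x \<le> norm (st x)" for x
  proof (cases "x = 0")
    case False
    have "(norm x)\<^sup>2 \<le> norm (st x) * norm x"
      using norm_st_mult_self[of x] norm_mult_ineq[of "st x" x] by simp
    thus ?thesis using False by (simp add: power2_eq_square)
  qed simp
  show ?thesis using le[of a] le[of "st a"] by simp
qed

lemma bounded_linear_st: "bounded_linear st"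
  by (rule bounded_linear_intro[where K=1]) (auto simp: st_add st_scaleR)

lemma norm_mult_st_self: "norm (a * st a) = (norm a)\<^sup>2"
  using norm_st_mult_self[of "st a"] by simp

lemma is_invertible_of_complex_minus:
  assumes "norm a < cmod c" shows "is_invertible (of_complex c - a)"
proof -
  have c: "c \<noteq> 0" using assms by auto
  have "norm (of_complex (inverse c) * a) \<le> norm a / cmod c"
    using norm_mult_ineq[of "of_complex (inverse c)" a] by (simp add: norm_inverse divide_inverse_commute)
  also have "\<dots> < 1" using assms c by (simp add: divide_less_eq)
  finally have "is_invertible (1 - of_complex (inverse c) * a)" by (rule neumann_series)
  moreover have "of_complex c - a = of_complex c * (1 - of_complex (inverse c) * a)"
    using c by (simp add: algebra_simps flip: mult.assoc of_complex_mult)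
  ultimately show ?thesis using is_invertible_of_complex[OF c] is_invertible_mult by metis
qed

lemma is_invertible_of_real_minus:
  fixes a :: 'a shows "norm a < \<bar>r\<bar> \<Longrightarrow> is_invertible (of_real r - a)"
  using is_invertible_of_complex_minus[of a "complex_of_real r"] by (simp add: of_complex_of_real)

definition selfadjoint :: "'a \<Rightarrow> bool" where
  "selfadjoint a \<longleftrightarrow> st a = a"

lemma selfadjoint_add: "selfadjoint a \<Longrightarrow> selfadjoint b \<Longrightarrow> selfadjoint (a + b)"
  and selfadjoint_diff: "selfadjoint a \<Longrightarrow> selfadjoint b \<Longrightarrow> selfadjoint (a - b)"
  and selfadjoint_minus: "selfadjoint a \<Longrightarrow> selfadjoint (- a)"
  and selfadjoint_scaleR: "selfadjoint a \<Longrightarrow> selfadjoint (r *\<^sub>R a)"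
  and selfadjoint_of_real: "selfadjoint (of_real r)"
  and selfadjoint_mult_self: "selfadjoint a \<Longrightarrow> selfadjoint (a * a)"
  and selfadjoint_power: "selfadjoint a \<Longrightarrow> selfadjoint (a ^ n)"
  and selfadjoint_st_mult_self: "selfadjoint (st b * b)"
  by (simp_all add: selfadjoint_def st_add st_diff st_minus st_scaleR st_of_real st_mult st_power)

lemma norm_mult_self_selfadjoint: "selfadjoint a \<Longrightarrow> norm (a * a) = (norm a)\<^sup>2"
  using norm_st_mult_self[of a] by (simp add: selfadjoint_def)

lemma norm_power_selfadjoint:
  assumes q: "selfadjoint q" and nq: "norm q = 1" shows "norm (q ^ n) = 1"
proof -
  have p2: "norm (q ^ (2 ^ m)) = 1" for m
  proof (induction m)
    case (Suc m)
    have "q ^ (2 ^ Suc m) = q ^ (2 ^ m) * q ^ (2 ^ m)" by (simp add: mult_2 power_add)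
    thus ?case using Suc norm_mult_self_selfadjoint[OF selfadjoint_power[OF q]] by simp
  qed (simp add: nq)
  have le: "norm (q ^ k) \<le> 1" for k using norm_power_ineq[of q k] nq by simp
  have "q ^ (2 ^ n) = q ^ n * q ^ (2 ^ n - n)" by (simp flip: power_add)
  hence "1 \<le> norm (q ^ n) * norm (q ^ (2 ^ n - n))" using p2[of n] norm_mult_ineq by metis
  also have "\<dots> \<le> norm (q ^ n)" using le[of "2 ^ n - n"] by (simp add: mult_left_le)
  finally show ?thesis using le[of n] by simp
qed

lemma is_invertible_nonreal_minus_selfadjoint:
  assumes h: "selfadjoint h" and im: "Im l \<noteq> 0" shows "is_invertible (of_complex l - h)"
proof (rule ccontr)
  assume ni: "\<not> is_invertible (of_complex l - h)"
  \<comment> \<open>Then \<open>(l + \<i> t) - (h + \<i> t)\<close> is singular, so \<open>\<bar>l + \<i> t\<bar> \<le> \<parallel>h + \<i> t\<parallel>\<close> for every real \<open>t\<close>;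
      but the C*-identity gives \<open>\<parallel>h + \<i> t\<parallel>\<^sup>2 \<le> \<parallel>h\<parallel>\<^sup>2 + t\<^sup>2\<close>, too small once \<open>t Im l\<close> is large.\<close>
  define t where "t = ((norm h)\<^sup>2 + 1) / (2 * Im l)"
  define c where "c = of_complex (\<i> * complex_of_real t)"
  define a where "a = h + c"
  have "of_complex (l + \<i> * complex_of_real t) - a = of_complex l - h"
    unfolding a_def c_def by (simp add: of_complex_add)
  hence le: "cmod (l + \<i> * complex_of_real t) \<le> norm a"
    using is_invertible_of_complex_minus ni by (metis not_less)
  have cc: "c * c = - of_real (t\<^sup>2)"
    unfolding c_def by (simp flip: of_complex_mult of_complex_of_real add: of_complex_minus power2_eq_square algebra_simps)
  have "st a * a = (h - c) * (h + c)"
    using h by (simp add: a_def c_def st_add st_of_complex selfadjoint_def of_complex_minus)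
  also have "\<dots> = h * h + of_real (t\<^sup>2)"
    using cc of_complex_commute[of _ h] by (simp add: c_def algebra_simps)
  finally have "(norm a)\<^sup>2 = norm (h * h + of_real (t\<^sup>2))" using norm_st_mult_self[of a] by simp
  also have "\<dots> \<le> norm (h * h) + t\<^sup>2"
    using norm_triangle_ineq[of "h * h" "of_real (t\<^sup>2)"] by (simp only: norm_of_real abs_power2)
  also have "\<dots> = (norm h)\<^sup>2 + t\<^sup>2" using norm_mult_self_selfadjoint[OF h] by simp
  finally have na: "(norm a)\<^sup>2 \<le> (norm h)\<^sup>2 + t\<^sup>2" .
  have "(Re l)\<^sup>2 + (Im l + t)\<^sup>2 = (cmod (l + \<i> * complex_of_real t))\<^sup>2"
    by (simp add: cmod_power2)
  also have "\<dots> \<le> (norm a)\<^sup>2" using le by (intro power_mono) auto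
  finally have "(Re l)\<^sup>2 + (Im l)\<^sup>2 + 2 * Im l * t \<le> (norm h)\<^sup>2"
    using na by (simp add: power2_eq_square algebra_simps)
  moreover have "2 * Im l * t = (norm h)\<^sup>2 + 1" unfolding t_def using im by simp
  ultimately show False using zero_le_power2[of "Re l"] zero_le_power2[of "Im l"] by linarith
qed

lemma inverse_of_one_minus_power_average:
  assumes n: "n > 0"
    and inv: "\<And>k. k < n \<Longrightarrow> is_invertible (1 - of_complex (exp (2 * pi * \<i> / of_nat n) ^ k) * y)"
  shows "is_invertible (1 - y ^ n)"
    "inverse_of (1 - y ^ n) =
       (1 / real n) *\<^sub>R (\<Sum>k<n. inverse_of (1 - of_complex (exp (2 * pi * \<i> / of_nat n) ^ k) * y))"
proof -
  define w where "w = exp (2 * pi * \<i> / of_nat n)"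
  define z where "z k = of_complex (w ^ k) * y" for k
  define P where "P k = (\<Sum>m<n. z k ^ m)" for k
  have "w ^ n = exp (of_nat n * (2 * pi * \<i> / of_nat n))"
    unfolding w_def by (simp only: exp_of_nat_mult)
  also have "\<dots> = exp (of_int (2 * 1) * pi * \<i>)" using n by (simp add: field_simps)
  also have "\<dots> = 1" unfolding exp_eq_1 by (auto intro!: exI[of _ 1])
  finally have "w ^ n = 1" .
  hence "(w ^ k) ^ n = 1" for k by (metis power_mult mult.commute power_one)
  hence zn: "z k ^ n = y ^ n" for k
    unfolding z_def power_of_complex_mult by simp
  have inv_z: "is_invertible (1 - z k)" if "k < n" for k
    using inv[OF that] unfolding z_def w_def .
  have L: "inverse_of (1 - z k) * (1 - y ^ n) = P k" if k: "k < n" for k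
  proof -
    have "1 - y ^ n = (1 - z k) * P k" unfolding P_def one_minus_mult_geometric_sum(1) zn ..
    thus ?thesis using inv_z[OF k] by (simp flip: mult.assoc)
  qed
  have R: "(1 - y ^ n) * inverse_of (1 - z k) = P k" if k: "k < n" for k
  proof -
    have "1 - y ^ n = P k * (1 - z k)" unfolding P_def one_minus_mult_geometric_sum(2) zn ..
    thus ?thesis using inv_z[OF k] by (simp add: mult.assoc)
  qed
  \<comment> \<open>Averaging over the \<open>n\<close>-th roots of unity kills every power \<open>y ^ m\<close> with \<open>0 < m < n\<close>.\<close>
  have "(\<Sum>k<n. P k) = (\<Sum>m<n. of_complex (\<Sum>k<n. (w ^ m) ^ k) * y ^ m)"
    unfolding P_def z_def power_of_complex_mult
    by (subst sum.swap) (simp add: sum_distrib_right of_complex_sum mult.commute flip: power_mult)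
  also have "\<dots> = (\<Sum>m<n. if m = 0 then of_nat n else 0)"
    using sum_roots_of_unity_power[OF n] unfolding w_def by (intro sum.cong) (auto simp: of_complex_of_nat)
  also have "\<dots> = real n *\<^sub>R 1" by (simp add: scaleR_conv_of_real)
  finally have SP: "(1 / real n) *\<^sub>R (\<Sum>k<n. P k) = 1" using n by simp
  define A where "A = (1 / real n) *\<^sub>R (\<Sum>k<n. inverse_of (1 - z k))"
  have "A * (1 - y ^ n) = 1" "(1 - y ^ n) * A = 1"
    using L R SP unfolding A_def by (simp_all add: sum_distrib_left sum_distrib_right)
  thus "is_invertible (1 - y ^ n)"
    "inverse_of (1 - y ^ n) =
       (1 / real n) *\<^sub>R (\<Sum>k<n. inverse_of (1 - of_complex (exp (2 * pi * \<i> / of_nat n) ^ k) * y))"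
    using is_invertibleI inverse_of_eq unfolding A_def z_def w_def by blast+
qed

lemma is_invertible_one_minus_disc:
  assumes q: "selfadjoint q" "norm q = 1"
    and inv: "is_invertible (1 - q)" "is_invertible (1 + q)"
    and mu: "cmod \<mu> \<le> 1"
  shows "is_invertible (1 - of_complex \<mu> * q)"
proof -
  have "\<mu> = 1 \<or> \<mu> = -1" if "cmod \<mu> = 1" "Im \<mu> = 0"
  proof -
    have "\<mu> = complex_of_real (Re \<mu>)" "\<bar>Re \<mu>\<bar> = 1"
      using that by (simp_all add: complex_eq_iff cmod_def)
    thus ?thesis by (metis abs_if of_real_1 of_real_minus minus_minus)
  qed
  then consider "cmod \<mu> < 1" | "cmod \<mu> = 1" "Im \<mu> \<noteq> 0" | "\<mu> = 1 \<or> \<mu> = -1"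
    using mu by fastforce
  thus ?thesis
  proof cases
    case 1
    have "norm (of_complex \<mu> * q) < 1"
      using norm_mult_ineq[of "of_complex \<mu>" q] q(2) 1 by simp
    thus ?thesis by (rule neumann_series)
  next
    case 2
    have "\<mu> * cnj \<mu> = 1" using 2 by (simp add: complex_norm_square[symmetric])
    hence "1 - of_complex \<mu> * q = of_complex \<mu> * (of_complex (cnj \<mu>) - q)"
      by (simp add: algebra_simps flip: of_complex_mult mult.assoc)
    moreover have "is_invertible (of_complex (cnj \<mu>) - q)"
      using is_invertible_nonreal_minus_selfadjoint[OF q(1)] 2 by simp
    moreover have "\<mu> \<noteq> 0" using 2 by auto
    ultimately show ?thesis using is_invertible_of_complex is_invertible_mult by metis
  next
    case 3
    thus ?thesis using inv by (auto simp: of_complex_minus)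
  qed
qed

lemma uniformly_continuous_on_resolvent:
  assumes inv: "\<And>\<mu>. cmod \<mu> \<le> 1 \<Longrightarrow> is_invertible (1 - of_complex \<mu> * q)"
  shows "uniformly_continuous_on (cball 0 1) (\<lambda>\<mu>. inverse_of (1 - of_complex \<mu> * q))"
proof (rule compact_uniformly_continuous[OF _ compact_cball])
  show "continuous_on (cball 0 1) (\<lambda>\<mu>. inverse_of (1 - of_complex \<mu> * q))"
    unfolding continuous_on_def
  proof
    fix x :: complex assume x: "x \<in> cball 0 1"
    have "((\<lambda>\<mu>. 1 - of_complex \<mu> * q) \<longlongrightarrow> 1 - of_complex x * q) (at x within cball 0 1)"
      by (intro tendsto_intros bounded_linear.tendsto[OF bounded_linear_of_complex])
    thus "((\<lambda>\<mu>. inverse_of (1 - of_complex \<mu> * q)) \<longlongrightarrow> inverse_of (1 - of_complex x * q))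
        (at x within cball 0 1)"
      by (rule tendsto_inverse_of) (use inv x in simp)
  qed
qed

lemma inverse_of_one_minus_power_resolvent_average:
  assumes inv: "\<And>\<mu>. cmod \<mu> \<le> 1 \<Longrightarrow> is_invertible (1 - of_complex \<mu> * q)"
    and n: "n > 0" and t: "0 \<le> t" "t \<le> 1"
  shows "is_invertible (1 - of_real (t ^ n) * q ^ n)"
    "inverse_of (1 - of_real (t ^ n) * q ^ n) = (1 / real n) *\<^sub>R
       (\<Sum>k<n. inverse_of (1 - of_complex (exp (2 * pi * \<i> / of_nat n) ^ k * complex_of_real t) * q))"
proof -
  let ?w = "exp (2 * pi * \<i> / of_nat n)"
  have "(of_complex (complex_of_real t) * q) ^ n = of_real (t ^ n) * q ^ n"
    unfolding power_of_complex_mult by (simp add: of_complex_of_real flip: of_real_power)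
  moreover have "of_complex (?w ^ k) * (of_complex (complex_of_real t) * q) =
      of_complex (?w ^ k * complex_of_real t) * q" for k
    by (simp add: of_complex_mult mult.assoc)
  moreover have "is_invertible (1 - of_complex (?w ^ k * complex_of_real t) * q)" for k
    using t by (intro inv) (simp add: norm_mult norm_power)
  ultimately show "is_invertible (1 - of_real (t ^ n) * q ^ n)"
    "inverse_of (1 - of_real (t ^ n) * q ^ n) = (1 / real n) *\<^sub>R
       (\<Sum>k<n. inverse_of (1 - of_complex (?w ^ k * complex_of_real t) * q))"
    using inverse_of_one_minus_power_average[OF n, of "of_complex (complex_of_real t) * q"] by simp_all
qed

text \<open>The spectral radius of a self-adjoint element is its norm. Instead of the spectral
  radius formula we use the resolvent \<open>G \<mu> = (1 - \<mu> q)\<^sup>-\<^sup>1\<close>: if it existed on the closed unit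
  disc, averaging it over \<open>n\<close>-th roots of unity would give \<open>(1 - q\<^sup>n)\<^sup>-\<^sup>1\<close> close to
  \<open>(1 - t\<^sup>n q\<^sup>n)\<^sup>-\<^sup>1 \<approx> 1\<close> by uniform continuity, forcing \<open>\<parallel>q\<^sup>n\<parallel> < 1\<close>.\<close>

lemma selfadjoint_norm_one_not_invertible:
  assumes q: "selfadjoint q" "norm q = 1"
  shows "\<not> (is_invertible (1 - q) \<and> is_invertible (1 + q))"
proof
  assume "is_invertible (1 - q) \<and> is_invertible (1 + q)"
  hence inv: "\<And>\<mu>. cmod \<mu> \<le> 1 \<Longrightarrow> is_invertible (1 - of_complex \<mu> * q)"
    using is_invertible_one_minus_disc[OF q] by blast
  define G where "G \<mu> = inverse_of (1 - of_complex \<mu> * q)" for \<mu>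
  obtain \<delta> where d: "\<delta> > 0"
    and dd: "\<And>x x'. x \<in> cball 0 1 \<Longrightarrow> x' \<in> cball 0 1 \<Longrightarrow> dist x' x < \<delta> \<Longrightarrow> dist (G x') (G x) < 1/4"
    using uniformly_continuous_on_resolvent[OF inv, folded G_def, unfolded uniformly_continuous_on_def,
        rule_format, of "1/4"] by auto
  define t where "t = max (1/2) (1 - \<delta>/2)"
  have t: "0 < t" "t < 1" "1 - t < \<delta>" unfolding t_def using d by auto
  have "eventually (\<lambda>n. t ^ n < 1/10) sequentially"
    using t by (intro order_tendstoD(2)[OF LIMSEQ_power_zero]) auto
  then obtain N where N: "\<And>m. m \<ge> N \<Longrightarrow> t ^ m < 1/10"
    unfolding eventually_sequentially by blast
  define n where "n = Suc N"
  have n: "n > 0" "t ^ n < 1/10" using N[of n] unfolding n_def by auto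
  define w where "w = exp (2 * pi * \<i> / of_nat n)"
  have t01: "0 \<le> t" "t \<le> 1" using t by auto
  note avg_t = inverse_of_one_minus_power_resolvent_average[OF inv n(1) t01, folded w_def G_def]
  note avg_1 = inverse_of_one_minus_power_resolvent_average[OF inv n(1) zero_le_one order_refl,
      folded w_def G_def, simplified]
  have wk: "cmod (w ^ k) = 1" for k unfolding w_def by (simp add: norm_power)
  have "dist (G (w ^ k * complex_of_real t)) (G (w ^ k)) < 1/4" for k
  proof (rule dd)
    have "dist (w ^ k * complex_of_real t) (w ^ k) = cmod (w ^ k) * cmod (complex_of_real (t - 1))"
      by (simp add: dist_norm algebra_simps flip: norm_mult)
    thus "dist (w ^ k * complex_of_real t) (w ^ k) < \<delta>"
      using t by (simp only: wk norm_of_real) simp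
  qed (use t in \<open>simp_all add: norm_mult wk\<close>)
  hence "(\<Sum>k<n. norm (G (w ^ k * complex_of_real t) - G (w ^ k))) \<le> (\<Sum>k<n. 1/4)"
    by (intro sum_mono) (simp add: dist_norm less_imp_le)
  hence "norm (\<Sum>k<n. G (w ^ k * complex_of_real t) - G (w ^ k)) \<le> real n / 4"
    by (intro order_trans[OF norm_sum]) simp
  moreover have "inverse_of (1 - of_real (t ^ n) * q ^ n) - inverse_of (1 - q ^ n) =
      (1 / real n) *\<^sub>R (\<Sum>k<n. G (w ^ k * complex_of_real t) - G (w ^ k))"
    using avg_t(2) avg_1(2) by (simp add: sum_subtractf scaleR_diff_right del: of_real_power)
  ultimately have "norm (inverse_of (1 - of_real (t ^ n) * q ^ n) - inverse_of (1 - q ^ n)) \<le> 1/4"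
    using n(1) by (simp add: divide_le_eq)
  moreover have "norm (of_real (t ^ n) * q ^ n :: 'a) < 1/10"
    unfolding scaleR_conv_of_real[symmetric] norm_scaleR norm_power_selfadjoint[OF q] using n t by simp
  ultimately have "norm (q ^ n) < 1"
    using avg_1(1) by (intro norm_less_one_if_inverse_of_one_minus_close) simp_all
  thus False using norm_power_selfadjoint[OF q] by simp
qed

lemma selfadjoint_norm_in_spectrum:
  assumes k: "selfadjoint k" "k \<noteq> 0"
  shows "\<not> (is_invertible (of_real (norm k) - k) \<and> is_invertible (of_real (norm k) + k))"
proof
  assume a: "is_invertible (of_real (norm k) - k) \<and> is_invertible (of_real (norm k) + k)"
  define r where "r = norm k"
  have r: "r > 0" using k unfolding r_def by simp
  define h where "h = (1 / r) *\<^sub>R k"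
  have h: "selfadjoint h" "norm h = 1" using k r unfolding h_def r_def by (simp_all add: selfadjoint_scaleR)
  have ir: "is_invertible (of_real (1 / r) :: 'a)"
    using is_invertible_of_complex[of "complex_of_real (1 / r)"] r unfolding of_complex_of_real by simp
  have "1 - h = of_real (1 / r) * (of_real r - k)" "1 + h = of_real (1 / r) * (of_real r + k)"
    unfolding h_def scaleR_conv_of_real using r by (simp_all add: algebra_simps flip: of_real_mult)
  thus False
    using selfadjoint_norm_one_not_invertible[OF h] is_invertible_mult[OF ir] a unfolding r_def by metis
qed

definition spec_nonneg :: "'a \<Rightarrow> bool" where
  "spec_nonneg a \<longleftrightarrow> selfadjoint a \<and> (\<forall>\<mu>::real. \<mu> < 0 \<longrightarrow> is_invertible (of_real \<mu> - a))"

lemma spec_nonneg_selfadjoint: "spec_nonneg a \<Longrightarrow> selfadjoint a"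
  by (simp add: spec_nonneg_def)

lemma spec_nonneg_invertible: "spec_nonneg a \<Longrightarrow> \<mu> < 0 \<Longrightarrow> is_invertible (of_real \<mu> - a)"
  by (simp add: spec_nonneg_def)

lemma spec_nonneg_invertible_add: "spec_nonneg a \<Longrightarrow> \<mu> > 0 \<Longrightarrow> is_invertible (of_real \<mu> + a)"
  using spec_nonneg_invertible[of a "- \<mu>"] is_invertible_minus[of "of_real (- \<mu>) - a"]
  by (simp add: add.commute)

lemma spec_nonnegI_norm:
  assumes h: "selfadjoint h" and t: "norm (of_real t - h) \<le> t" shows "spec_nonneg h"
  unfolding spec_nonneg_def
proof (intro conjI allI impI h)
  fix \<mu> :: real assume "\<mu> < 0"
  hence "is_invertible (- (of_real (t - \<mu>) - (of_real t - h)))"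
    using t by (intro is_invertible_minus is_invertible_of_real_minus) simp
  thus "is_invertible (of_real \<mu> - h)" by (simp add: of_real_diff)
qed

lemma spec_nonneg_norm_minus: "spec_nonneg h \<Longrightarrow> spec_nonneg (of_real (norm h) - h)"
  by (rule spec_nonnegI_norm[where t="norm h"])
    (simp_all add: selfadjoint_diff selfadjoint_of_real spec_nonneg_selfadjoint)

lemma spec_nonneg_norm_of_real_minus:
  assumes p: "spec_nonneg h" and t: "norm h \<le> t" shows "norm (of_real t - h) \<le> t"
proof (rule ccontr)
  define k where "k = of_real t - h"
  assume "\<not> ?thesis"
  hence rt: "norm k > t" "t \<ge> 0" using t unfolding k_def by (auto intro: order_trans[OF norm_ge_zero])
  have "is_invertible (- (of_real (t - norm k) - h))"
    using rt by (intro is_invertible_minus spec_nonneg_invertible[OF p]) simp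
  hence "is_invertible (of_real (norm k) - k)" unfolding k_def by (simp add: of_real_diff algebra_simps)
  moreover have "is_invertible (of_real (norm k) + k)"
    using is_invertible_of_real_minus[of h "norm k + t"] t rt unfolding k_def
    by (simp add: of_real_add add_diff_eq)
  moreover have "selfadjoint k" "k \<noteq> 0"
    using spec_nonneg_selfadjoint[OF p] rt unfolding k_def by (auto simp: selfadjoint_diff selfadjoint_of_real)
  ultimately show False using selfadjoint_norm_in_spectrum by blast
qed

lemma spec_nonneg_add: "spec_nonneg a \<Longrightarrow> spec_nonneg b \<Longrightarrow> spec_nonneg (a + b)"
proof -
  assume a: "spec_nonneg a" and b: "spec_nonneg b"
  have "norm (of_real (norm a + norm b) - (a + b)) = norm ((of_real (norm a) - a) + (of_real (norm b) - b))"
    by (simp add: of_real_add algebra_simps)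
  also have "\<dots> \<le> norm a + norm b"
    by (rule order_trans[OF norm_triangle_ineq add_mono[OF spec_nonneg_norm_of_real_minus[OF a order.refl]
          spec_nonneg_norm_of_real_minus[OF b order.refl]]])
  finally show ?thesis
    using spec_nonneg_selfadjoint[OF a] spec_nonneg_selfadjoint[OF b] by (intro spec_nonnegI_norm selfadjoint_add)
qed

lemma spec_nonneg_of_real: "r \<ge> 0 \<Longrightarrow> spec_nonneg (of_real r)"
  by (rule spec_nonnegI_norm[where t=r]) (auto simp: selfadjoint_of_real)

lemma spec_nonneg_0 [simp]: "spec_nonneg 0"
  using spec_nonneg_of_real[of 0] by simp

lemma spec_nonneg_scaleR: "spec_nonneg a \<Longrightarrow> c \<ge> 0 \<Longrightarrow> spec_nonneg (c *\<^sub>R a)"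
proof -
  assume a: "spec_nonneg a" and c: "c \<ge> 0"
  have "of_real (c * norm a) - c *\<^sub>R a = c *\<^sub>R (of_real (norm a) - a)"
    by (simp add: of_real_def scaleR_diff_right)
  hence "norm (of_real (c * norm a) - c *\<^sub>R a) = c * norm (of_real (norm a) - a)"
    using c by simp
  also have "\<dots> \<le> c * norm a"
    using spec_nonneg_norm_of_real_minus[OF a order.refl] c by (simp add: mult_left_mono)
  finally show ?thesis using spec_nonneg_selfadjoint[OF a] by (intro spec_nonnegI_norm selfadjoint_scaleR)
qed

lemma spec_nonneg_sum: "(\<And>i. i \<in> A \<Longrightarrow> spec_nonneg (f i)) \<Longrightarrow> spec_nonneg (sum f A)"
  by (induction A rule: infinite_finite_induct) (auto intro: spec_nonneg_add)

lemma spec_nonneg_mult_self: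
  assumes h: "selfadjoint h" shows "spec_nonneg (h * h)"
  unfolding spec_nonneg_def
proof (intro conjI allI impI selfadjoint_mult_self h)
  fix \<mu> :: real assume m: "\<mu> < 0"
  define c where "c = of_complex (\<i> * complex_of_real (sqrt (- \<mu>)))"
  have "(\<i> * complex_of_real (sqrt (- \<mu>))) * (\<i> * complex_of_real (sqrt (- \<mu>))) = complex_of_real \<mu>"
    using m by (simp add: algebra_simps flip: of_real_mult)
  hence cc: "c * c = of_real \<mu>" unfolding c_def by (simp flip: of_complex_mult add: of_complex_of_real)
  have "of_real \<mu> - h * h = (c - h) * (c + h)"
    using cc of_complex_commute[of _ h] by (simp add: algebra_simps c_def)
  moreover have "is_invertible (c - h)"
    unfolding c_def using m by (intro is_invertible_nonreal_minus_selfadjoint[OF h]) simp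
  moreover have "is_invertible (- (of_complex (- (\<i> * complex_of_real (sqrt (- \<mu>)))) - h))"
    using m by (intro is_invertible_minus is_invertible_nonreal_minus_selfadjoint[OF h]) simp
  hence "is_invertible (c + h)" unfolding c_def by (simp add: of_complex_minus add.commute)
  ultimately show "is_invertible (of_real \<mu> - h * h)" by (metis is_invertible_mult)
qed

lemma spec_nonneg_limit:
  assumes f: "f \<longlonglongrightarrow> a" and p: "\<And>n. spec_nonneg (f n)" shows "spec_nonneg a"
proof -
  have "(\<lambda>n. st (f n)) \<longlonglongrightarrow> st a" by (rule bounded_linear.tendsto[OF bounded_linear_st f])
  moreover have "(\<lambda>n. st (f n)) = f" using p by (auto simp: spec_nonneg_def selfadjoint_def)
  ultimately have sa: "selfadjoint a" using f LIMSEQ_unique unfolding selfadjoint_def by metis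
  define T where "T = norm a + 1"
  have "eventually (\<lambda>n. dist (f n) a < 1) sequentially" using f by (simp add: tendsto_iff)
  hence ev: "eventually (\<lambda>n. norm (of_real T - f n) \<le> T) sequentially"
  proof (rule eventually_mono)
    fix n assume "dist (f n) a < 1"
    hence "norm (f n) \<le> T" unfolding T_def dist_norm using norm_triangle_ineq2[of "f n" a] by linarith
    thus "norm (of_real T - f n) \<le> T" by (rule spec_nonneg_norm_of_real_minus[OF p])
  qed
  have "(\<lambda>n. norm (of_real T - f n)) \<longlonglongrightarrow> norm (of_real T - a)"
    by (intro tendsto_intros f)
  hence "norm (of_real T - a) \<le> T" using ev by (rule tendsto_upperbound) simp
  thus ?thesis by (rule spec_nonnegI_norm[OF sa])
qed

lemma spec_nonneg_norm_mono:
  assumes a: "spec_nonneg a" and ba: "spec_nonneg (b - a)" shows "norm a \<le> norm b"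
proof (rule ccontr)
  assume "\<not> ?thesis"
  hence rt: "norm a > norm b" by simp
  have b: "spec_nonneg b" using spec_nonneg_add[OF a ba] by simp
  have "spec_nonneg (of_real (norm b) - a)" using spec_nonneg_add[OF spec_nonneg_norm_minus[OF b] ba] by simp
  hence "is_invertible (- (of_real (norm b - norm a) - (of_real (norm b) - a)))"
    using rt by (intro is_invertible_minus spec_nonneg_invertible) simp_all
  hence "is_invertible (of_real (norm a) - a)" by (simp add: of_real_diff)
  moreover have "is_invertible (of_real (norm a) + a)"
    using rt by (intro spec_nonneg_invertible_add[OF a]) (auto intro: le_less_trans[OF norm_ge_zero])
  moreover have "a \<noteq> 0" using rt by auto
  ultimately show False using selfadjoint_norm_in_spectrum spec_nonneg_selfadjoint[OF a] by blast
qed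

end

section \<open>Square roots of positive elements\<close>

definition sqrt_one_minus_coeff :: "nat \<Rightarrow> real" where
  "sqrt_one_minus_coeff k = ((1/2) gchoose k) * (-1) ^ k"

lemma sqrt_one_minus_coeff_0 [simp]: "sqrt_one_minus_coeff 0 = 1"
  by (simp add: sqrt_one_minus_coeff_def)

lemma sqrt_one_minus_coeff_nonpos:
  assumes "k \<ge> 1" shows "sqrt_one_minus_coeff k \<le> 0"
proof -
  obtain j where k: "k = Suc j" using assms by (cases k) auto
  have "((1/2::real) gchoose k) = (-1) ^ k * ((of_nat k - 1/2 - 1) gchoose k)"
    by (rule gbinomial_negated_upper)
  hence "sqrt_one_minus_coeff k = ((of_nat k - 3/2) gchoose k)"
    unfolding sqrt_one_minus_coeff_def by (simp flip: power_add)
  also have "\<dots> = (\<Prod>i = 0..<j. (of_nat (Suc j) - 3/2 - of_nat i) / of_nat (Suc j - i))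
      * ((of_nat (Suc j) - 3/2 - of_nat j) / of_nat (Suc j - j))"
    unfolding k gbinomial_altdef_of_nat by (rule prod.atLeast0_lessThan_Suc)
  also have "\<dots> \<le> 0"
    by (intro mult_nonneg_nonpos prod_nonneg) auto
  finally show ?thesis .
qed

lemma sqrt_one_minus_coeff_sum_nonneg: "(\<Sum>k\<le>N. sqrt_one_minus_coeff k) \<ge> 0"
proof -
  have "(\<Sum>k\<le>N. sqrt_one_minus_coeff k) = (-1) ^ N * ((1/2 - 1) gchoose N)"
    unfolding sqrt_one_minus_coeff_def by (rule gbinomial_sum_lower_neg)
  also have "((1/2 - 1::real) gchoose N) = (-1) ^ N * ((of_nat N - 1/2) gchoose N)"
    using gbinomial_negated_upper[of "1/2 - 1 :: real" N] by simp
  finally have "(\<Sum>k\<le>N. sqrt_one_minus_coeff k) = ((of_nat N - 1/2) gchoose N)"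
    by (simp flip: power_add)
  also have "\<dots> = (\<Prod>i = 0..<N. (of_nat N - 1/2 - of_nat i) / of_nat (N - i))"
    by (rule gbinomial_altdef_of_nat)
  also have "\<dots> \<ge> 0" by (intro prod_nonneg) (auto simp: of_nat_diff)
  finally show ?thesis .
qed

lemma sum_abs_sqrt_one_minus_coeff_le: "(\<Sum>k<n. \<bar>sqrt_one_minus_coeff (Suc k)\<bar>) \<le> 1"
proof -
  have "\<bar>sqrt_one_minus_coeff (Suc k)\<bar> = - sqrt_one_minus_coeff (Suc k)" for k
    using sqrt_one_minus_coeff_nonpos[of "Suc k"] by simp
  hence "(\<Sum>k<n. \<bar>sqrt_one_minus_coeff (Suc k)\<bar>) = - (\<Sum>k<n. sqrt_one_minus_coeff (Suc k))"
    by (simp add: sum_negf)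
  also have "(\<Sum>k<n. sqrt_one_minus_coeff (Suc k)) = (\<Sum>k\<le>n. sqrt_one_minus_coeff k) - 1"
    by (simp add: sum.atMost_shift)
  finally show ?thesis using sqrt_one_minus_coeff_sum_nonneg[of n] by simp
qed

lemma summable_abs_sqrt_one_minus_coeff: "summable (\<lambda>k. \<bar>sqrt_one_minus_coeff (Suc k)\<bar>)"
proof (rule bounded_imp_summable[where B=1])
  show "(\<Sum>k\<le>n. \<bar>sqrt_one_minus_coeff (Suc k)\<bar>) \<le> 1" for n
    using sum_abs_sqrt_one_minus_coeff_le[of "Suc n"] by (simp only: lessThan_Suc_atMost)
qed simp

lemma suminf_abs_sqrt_one_minus_coeff_le: "(\<Sum>k. \<bar>sqrt_one_minus_coeff (Suc k)\<bar>) \<le> 1"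
  by (rule suminf_le_const[OF summable_abs_sqrt_one_minus_coeff sum_abs_sqrt_one_minus_coeff_le])

lemma sqrt_one_minus_coeff_convolution:
  "(\<Sum>i\<le>k. sqrt_one_minus_coeff i * sqrt_one_minus_coeff (k - i)) =
     (if k = 0 then 1 else if k = 1 then -1 else 0)"
proof -
  have "(\<Sum>i\<le>k. sqrt_one_minus_coeff i * sqrt_one_minus_coeff (k - i)) =
      (\<Sum>i\<le>k. ((1/2) gchoose i) * ((1/2) gchoose (k - i))) * (-1) ^ k"
    unfolding sqrt_one_minus_coeff_def sum_distrib_right
    by (intro sum.cong refl) (simp flip: power_add)
  also have "(\<Sum>i\<le>k. ((1/2::real) gchoose i) * ((1/2) gchoose (k - i))) = (1/2 + 1/2) gchoose k"
    unfolding atMost_atLeast0 by (rule gbinomial_Vandermonde)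
  also have "((1/2 + 1/2) gchoose k) = (of_nat (1 choose k) :: real)"
    using binomial_gbinomial[where 'a=real, of 1 k] by simp
  finally show ?thesis by (cases k) (auto simp: binomial_eq_0)
qed

context cstar_algebra
begin

definition sqrt_one_minus :: "'a \<Rightarrow> 'a" where
  "sqrt_one_minus y = (\<Sum>k. sqrt_one_minus_coeff k *\<^sub>R y ^ k)"

lemma summable_sqrt_one_minus:
  fixes y :: 'a
  assumes "norm y \<le> 1"
  shows "summable (\<lambda>k. norm (sqrt_one_minus_coeff (Suc k) *\<^sub>R y ^ Suc k))"
    and "summable (\<lambda>k. norm (sqrt_one_minus_coeff k *\<^sub>R y ^ k))"
proof -
  have le: "norm (y ^ k) \<le> 1" for k
    using norm_power_ineq[of y k] assms by (metis power_le_one norm_ge_zero order_trans)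
  show *: "summable (\<lambda>k. norm (sqrt_one_minus_coeff (Suc k) *\<^sub>R y ^ Suc k))"
    using le by (intro summable_comparison_test[OF _ summable_abs_sqrt_one_minus_coeff])
      (auto simp: mult_left_le simp del: power_Suc)
  thus "summable (\<lambda>k. norm (sqrt_one_minus_coeff k *\<^sub>R y ^ k))"
    by (subst summable_Suc_iff[symmetric])
qed

lemma sqrt_one_minus_square:
  assumes y: "norm y \<le> 1" shows "sqrt_one_minus y * sqrt_one_minus y = 1 - y"
proof -
  note s = summable_sqrt_one_minus(2)[OF y]
  have "sqrt_one_minus y * sqrt_one_minus y =
      (\<Sum>k. \<Sum>i\<le>k. (sqrt_one_minus_coeff i *\<^sub>R y ^ i) * (sqrt_one_minus_coeff (k - i) *\<^sub>R y ^ (k - i)))"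
    unfolding sqrt_one_minus_def by (rule Cauchy_product[OF s s])
  also have "\<dots> = (\<Sum>k. (if k = 0 then 1 else if k = 1 then -1 else 0) *\<^sub>R y ^ k)"
  proof (intro suminf_cong)
    fix k
    have "(\<Sum>i\<le>k. (sqrt_one_minus_coeff i *\<^sub>R y ^ i) * (sqrt_one_minus_coeff (k - i) *\<^sub>R y ^ (k - i))) =
        (\<Sum>i\<le>k. sqrt_one_minus_coeff i * sqrt_one_minus_coeff (k - i)) *\<^sub>R y ^ k"
      unfolding scaleR_sum_left by (intro sum.cong refl) (simp flip: power_add)
    thus "(\<Sum>i\<le>k. (sqrt_one_minus_coeff i *\<^sub>R y ^ i) * (sqrt_one_minus_coeff (k - i) *\<^sub>R y ^ (k - i))) =
        (if k = 0 then 1 else if k = 1 then -1 else 0) *\<^sub>R y ^ k"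
      unfolding sqrt_one_minus_coeff_convolution .
  qed
  also have "\<dots> = (\<Sum>k\<in>{0,1}. (if k = 0 then 1 else if k = 1 then -1 else 0) *\<^sub>R y ^ k)"
    by (rule suminf_finite) auto
  finally show ?thesis by simp
qed

lemma norm_one_minus_sqrt_one_minus:
  assumes y: "norm y \<le> 1" shows "norm (1 - sqrt_one_minus y) \<le> 1"
proof -
  note ss = summable_sqrt_one_minus(1)[OF y]
  have "1 - sqrt_one_minus y = - (\<Sum>k. sqrt_one_minus_coeff (Suc k) *\<^sub>R y ^ Suc k)"
    using suminf_split_head[OF summable_norm_cancel[OF summable_sqrt_one_minus(2)[OF y]]]
    unfolding sqrt_one_minus_def by simp
  hence "norm (1 - sqrt_one_minus y) \<le> (\<Sum>k. norm (sqrt_one_minus_coeff (Suc k) *\<^sub>R y ^ Suc k))"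
    using summable_norm[OF ss] by simp
  also have "\<dots> \<le> (\<Sum>k. \<bar>sqrt_one_minus_coeff (Suc k)\<bar>)"
  proof (rule suminf_le[OF _ ss summable_abs_sqrt_one_minus_coeff])
    fix k
    have "norm (y ^ Suc k) \<le> 1"
      using norm_power_ineq[of y "Suc k"] y by (metis power_le_one norm_ge_zero order_trans)
    thus "norm (sqrt_one_minus_coeff (Suc k) *\<^sub>R y ^ Suc k) \<le> \<bar>sqrt_one_minus_coeff (Suc k)\<bar>"
      by (simp add: mult_left_le del: power_Suc)
  qed
  also have "\<dots> \<le> 1" by (rule suminf_abs_sqrt_one_minus_coeff_le)
  finally show ?thesis .
qed

lemma selfadjoint_sqrt_one_minus:
  assumes y: "norm y \<le> 1" and sy: "selfadjoint y" shows "selfadjoint (sqrt_one_minus y)"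
proof -
  have "st (sqrt_one_minus y) = (\<Sum>k. st (sqrt_one_minus_coeff k *\<^sub>R y ^ k))"
    unfolding sqrt_one_minus_def
    by (rule bounded_linear.suminf[OF bounded_linear_st summable_norm_cancel[OF summable_sqrt_one_minus(2)[OF y]]])
  thus ?thesis using sy by (simp add: selfadjoint_def st_scaleR st_power sqrt_one_minus_def)
qed

lemma sqrt_one_minus_commute:
  assumes y: "norm y \<le> 1" and xy: "x * y = y * x" shows "x * sqrt_one_minus y = sqrt_one_minus y * x"
proof -
  note s = summable_norm_cancel[OF summable_sqrt_one_minus(2)[OF y]]
  have "x * sqrt_one_minus y = (\<Sum>k. x * (sqrt_one_minus_coeff k *\<^sub>R y ^ k))"
    unfolding sqrt_one_minus_def by (rule suminf_mult[OF s, symmetric])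
  also have "\<dots> = (\<Sum>k. (sqrt_one_minus_coeff k *\<^sub>R y ^ k) * x)"
    using power_commuting_commutes[OF xy[symmetric]] by simp
  also have "\<dots> = sqrt_one_minus y * x"
    unfolding sqrt_one_minus_def by (rule suminf_mult2[OF s, symmetric])
  finally show ?thesis .
qed

lemma spec_nonneg_sqrt:
  assumes h: "spec_nonneg h"
  obtains s where "spec_nonneg s" "s * s = h" "\<And>x. x * h = h * x \<Longrightarrow> x * s = s * x"
proof (cases "h = 0")
  case True thus ?thesis using that[of 0] by simp
next
  case False
  define t where "t = norm h"
  have t: "t > 0" using False unfolding t_def by simp
  define g where "g = (1 / t) *\<^sub>R h"
  have g: "spec_nonneg g" "norm g = 1"
    unfolding g_def t_def using t t_def by (simp_all add: spec_nonneg_scaleR h)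
  \<comment> \<open>\<open>\<parallel>1 - g\<parallel> \<le> 1\<close>, so the binomial series gives \<open>\<surd>g = \<surd>(1 - y)\<close> with \<open>y = 1 - g\<close>.\<close>
  define y where "y = 1 - g"
  have ny: "norm y \<le> 1" unfolding y_def using spec_nonneg_norm_of_real_minus[OF g(1), of 1] g(2) by simp
  have sy: "selfadjoint y"
    unfolding y_def using spec_nonneg_selfadjoint[OF g(1)] by (simp add: selfadjoint_diff selfadjoint_of_real[of 1, simplified])
  define u where "u = sqrt_one_minus y"
  have uu: "u * u = g" unfolding u_def using sqrt_one_minus_square[OF ny] by (simp add: y_def)
  have "norm (of_real 1 - u) \<le> 1" using norm_one_minus_sqrt_one_minus[OF ny] unfolding u_def by simp
  hence pu: "spec_nonneg u" by (rule spec_nonnegI_norm[OF selfadjoint_sqrt_one_minus[OF ny sy, folded u_def]])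
  define s where "s = sqrt t *\<^sub>R u"
  show ?thesis
  proof (rule that)
    show "spec_nonneg s" unfolding s_def using t by (intro spec_nonneg_scaleR pu) simp
    show "s * s = h" using t uu unfolding s_def g_def by simp
    fix x assume "x * h = h * x"
    hence "x * y = y * x" unfolding y_def g_def by (simp add: algebra_simps)
    hence "x * u = u * x" unfolding u_def by (rule sqrt_one_minus_commute[OF ny])
    thus "x * s = s * x" unfolding s_def by simp
  qed
qed

lemma spec_nonneg_diff_abs:
  assumes x: "selfadjoint x" and s: "spec_nonneg s" and ss: "s * s = x * x" and sx: "s * x = x * s"
  shows "spec_nonneg (s - x)"
  unfolding spec_nonneg_def
proof (intro conjI allI impI)
  define p where "p = s - x"
  show "selfadjoint (s - x)" using spec_nonneg_selfadjoint[OF s] x by (rule selfadjoint_diff)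
  fix \<mu> :: real assume m: "\<mu> < 0"
  \<comment> \<open>\<open>p\<^sup>2 = 2 p s\<close>, hence \<open>(\<mu> - p) (1 - p (2 s - \<mu>)\<^sup>-\<^sup>1) = \<mu>\<close>.\<close>
  have pp: "p * p = 2 *\<^sub>R (p * s)"
    unfolding p_def using ss sx by (simp add: algebra_simps scaleR_2)
  have "is_invertible (- (of_real \<mu> - 2 *\<^sub>R s))"
    using m s by (intro is_invertible_minus spec_nonneg_invertible spec_nonneg_scaleR) auto
  hence iv: "is_invertible (2 *\<^sub>R s - of_real \<mu>)" by simp
  define w where "w = inverse_of (2 *\<^sub>R s - of_real \<mu>)"
  have w1: "(2 *\<^sub>R s - of_real \<mu>) * w = 1" using iv unfolding w_def by simp
  have "p * (2 *\<^sub>R s - of_real \<mu>) = (2 *\<^sub>R s - of_real \<mu>) * p"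
    unfolding p_def using sx by (simp add: algebra_simps of_real_def)
  hence pw: "p * w = w * p" unfolding w_def by (rule inverse_of_commute[OF iv])
  have "(of_real \<mu> - p) * (1 - p * w) = of_real \<mu> - p - \<mu> *\<^sub>R (p * w) + (p * p) * w"
    by (simp add: algebra_simps of_real_def)
  also have "\<dots> = of_real \<mu> - p + p * ((2 *\<^sub>R s - of_real \<mu>) * w)"
    unfolding pp by (simp add: algebra_simps of_real_def)
  finally have key: "(of_real \<mu> - p) * (1 - p * w) = of_real \<mu>" using w1 by simp
  have key2: "(1 - p * w) * (of_real \<mu> - p) = of_real \<mu>"
  proof -
    have "(1 - p * w) * (of_real \<mu> - p) = of_real \<mu> - p - \<mu> *\<^sub>R (p * w) + p * (w * p)"
      by (simp add: algebra_simps of_real_def mult.assoc)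
    also have "\<dots> = (of_real \<mu> - p) * (1 - p * w)"
      unfolding pw[symmetric] by (simp add: algebra_simps of_real_def mult.assoc)
    finally show ?thesis using key by simp
  qed
  have m0: "(1 / \<mu>) *\<^sub>R (of_real \<mu> :: 'a) = 1" using m by (simp add: of_real_def)
  show "is_invertible (of_real \<mu> - (s - x))"
    using key key2 m0 unfolding p_def
    by (intro is_invertibleI[where b="(1 / \<mu>) *\<^sub>R (1 - p * w)"]) (simp_all add: p_def)
qed

lemma spec_nonneg_uminus_st_mult_self_imp_zero:
  assumes p: "spec_nonneg (- (st y * y))" shows "y = 0"
proof -
  define I where "I = of_complex \<i>"
  have II: "I * I = -1" unfolding I_def by (rule of_complex_i_squared)
  have Ic: "I * z = z * I" for z unfolding I_def by (rule of_complex_commute)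
  define h where "h = (1/2) *\<^sub>R (y + st y)"
  define k where "k = (1/2) *\<^sub>R (I * (y - st y))"
  have sh: "selfadjoint h" unfolding h_def selfadjoint_def by (simp add: st_scaleR st_add add.commute)
  have sk: "selfadjoint k" unfolding k_def selfadjoint_def
    by (simp add: I_def st_scaleR st_mult st_diff st_of_complex of_complex_minus Ic[unfolded I_def] algebra_simps)
  have "(I * (y - st y)) * (I * (y - st y)) = (I * I) * ((y - st y) * (y - st y))"
    by (metis Ic mult.assoc)
  hence kk: "k * k = - ((1/4) *\<^sub>R ((y - st y) * (y - st y)))"
    unfolding k_def II by simp
  \<comment> \<open>\<open>y y\<^sup>* = 2 (h\<^sup>2 + k\<^sup>2) - y\<^sup>* y \<ge> 0\<close> for the real and imaginary parts \<open>h, k\<close> of \<open>y\<close>. Since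
      \<open>y\<^sup>* y\<close> and \<open>y y\<^sup>*\<close> have the same spectrum away from \<open>0\<close>, that of \<open>y\<^sup>* y\<close> is \<open>{0}\<close>.\<close>
  have "y * st y = 2 *\<^sub>R (h * h) + 2 *\<^sub>R (k * k) + (- (st y * y))"
    unfolding h_def kk by (simp add: algebra_simps scaleR_2[symmetric])
  hence pyy: "spec_nonneg (y * st y)"
    using p by (metis spec_nonneg_add spec_nonneg_scaleR spec_nonneg_mult_self sh sk zero_le_numeral)
  have inv: "is_invertible (of_real \<mu> - st y * y)" if "\<mu> \<noteq> 0" for \<mu>
  proof (cases "\<mu> < 0")
    case True
    thus ?thesis using spec_nonneg_invertible[OF pyy] is_invertible_of_real_minus_mult_swap that by blast
  next
    case False
    hence "is_invertible (of_real (- \<mu>) - (- (st y * y)))"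
      using that by (intro spec_nonneg_invertible[OF p]) simp
    thus ?thesis using is_invertible_minus by fastforce
  qed
  have "st y * y = 0"
  proof (rule ccontr)
    assume ne: "st y * y \<noteq> 0"
    have "is_invertible (- (of_real (- norm (st y * y)) - st y * y))"
      using ne by (intro inv is_invertible_minus) simp
    moreover have "- (of_real (- norm (st y * y)) - st y * y) = of_real (norm (st y * y)) + st y * y"
      by simp
    moreover have "is_invertible (of_real (norm (st y * y)) - st y * y)" using ne by (intro inv) simp
    ultimately show False using selfadjoint_norm_in_spectrum[OF selfadjoint_st_mult_self ne] by metis
  qed
  thus ?thesis using norm_st_mult_self[of y] by simp
qed

text \<open>The Fukamiya--Kelley--Vaught theorem, following the classical proof: split
  \<open>x = a\<^sup>* a\<close> as \<open>x = u - v\<close> with \<open>u, v \<ge> 0\<close> and \<open>u v = 0\<close>; then \<open>(a v)\<^sup>* (a v) = - v\<^sup>3\<close>, which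
  forces \<open>v = 0\<close>.\<close>

lemma spec_nonneg_st_mult_self: "spec_nonneg (st a * a)"
proof -
  define x where "x = st a * a"
  have sx: "selfadjoint x" unfolding x_def by (rule selfadjoint_st_mult_self)
  obtain s where s: "spec_nonneg s" "s * s = x * x" and sc: "\<And>z. z * (x * x) = (x * x) * z \<Longrightarrow> z * s = s * z"
    using spec_nonneg_sqrt[OF spec_nonneg_mult_self[OF sx]] by blast
  have xs: "x * s = s * x" using sc[of x] by (simp add: mult.assoc)
  define u where "u = (1/2) *\<^sub>R (s + x)"
  define v where "v = (1/2) *\<^sub>R (s - x)"
  have pv: "spec_nonneg v" unfolding v_def
    using spec_nonneg_diff_abs[OF sx s xs[symmetric]] by (rule spec_nonneg_scaleR) simp
  have pu: "spec_nonneg u" unfolding u_def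
    using spec_nonneg_diff_abs[of "- x" s] sx s xs by (intro spec_nonneg_scaleR) (auto simp: selfadjoint_minus)
  have xuv: "x = u - v" unfolding u_def v_def by (simp add: algebra_simps scaleR_2[symmetric])
  have vu: "v * u = 0" unfolding u_def v_def using s(2) xs by (simp add: algebra_simps)
  obtain r where r: "spec_nonneg r" "r * r = v" using spec_nonneg_sqrt[OF pv] by blast
  have "v * v * v = (r * r) * (r * r) * (r * r)" using r(2) by simp
  hence "v * v * v = (r * r * r) * (r * r * r)" by (simp only: mult.assoc)
  moreover have "selfadjoint (r * r * r)"
    using spec_nonneg_selfadjoint[OF r(1)] by (simp add: selfadjoint_def st_mult mult.assoc)
  ultimately have pvvv: "spec_nonneg (v * v * v)" by (simp add: spec_nonneg_mult_self)
  have sv: "selfadjoint v" by (rule spec_nonneg_selfadjoint[OF pv])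
  have "st (a * v) * (a * v) = v * x * v"
    using sv unfolding x_def by (simp add: selfadjoint_def st_mult mult.assoc)
  also have "\<dots> = - (v * v * v)" unfolding xuv by (simp add: algebra_simps vu)
  finally have avv: "st (a * v) * (a * v) = - (v * v * v)" .
  hence "a * v = 0" using spec_nonneg_uminus_st_mult_self_imp_zero pvvv by (metis minus_minus)
  hence "(v * v) * (v * v) = 0" using avv by (metis mult.assoc mult_zero_right neg_equal_0_iff_equal)
  hence "v = 0"
    using norm_mult_self_selfadjoint[OF selfadjoint_mult_self[OF sv]] norm_mult_self_selfadjoint[OF sv] by simp
  thus ?thesis using pu xuv unfolding x_def by simp
qed

lemma spec_nonneg_mult_st_self: "spec_nonneg (b * st b)"
  using spec_nonneg_st_mult_self[of "st b"] by simp

lemma cpositive_imp_spec_nonneg: "cpositive st a \<Longrightarrow> spec_nonneg a"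
  unfolding cpositive_def using spec_nonneg_st_mult_self by auto

lemma spec_nonneg_conj:
  assumes h: "spec_nonneg h" shows "spec_nonneg (c * h * st c)"
proof -
  obtain s where s: "spec_nonneg s" "s * s = h" using spec_nonneg_sqrt[OF h] by blast
  have "st (c * s) = s * st c"
    using spec_nonneg_selfadjoint[OF s(1)] by (simp add: selfadjoint_def st_mult)
  moreover have "c * h * st c = (c * s) * (s * st c)" unfolding s(2)[symmetric] by (simp only: mult.assoc)
  ultimately have "c * h * st c = (c * s) * st (c * s)" by simp
  thus ?thesis using spec_nonneg_mult_st_self by simp
qed

text \<open>The common core of the Cauchy--Schwarz inequalities below: nonnegativity of
  \<open>\<langle>x - t b y, x - t b y\<rangle> = U - 2 t b b\<^sup>* + t\<^sup>2 b C b\<^sup>*\<close> for all real \<open>t\<close>.\<close>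

lemma norm_square_le_of_quadratic_spec_nonneg:
  assumes U: "spec_nonneg U" and C: "spec_nonneg C"
    and q: "\<And>t::real. spec_nonneg (U - (2 * t) *\<^sub>R (b * st b) + (t * t) *\<^sub>R (b * C * st b))"
  shows "(norm b)\<^sup>2 \<le> norm U * norm C"
proof -
  have nb: "norm (b * st b) = (norm b)\<^sup>2" by (rule norm_mult_st_self)
  have pc: "spec_nonneg (b * (of_real (norm C) - C) * st b)"
    by (rule spec_nonneg_conj[OF spec_nonneg_norm_minus[OF C]])
  have q2: "spec_nonneg (U - (2 * t) *\<^sub>R (b * st b) + (t * t * norm C) *\<^sub>R (b * st b))" for t
  proof -
    have "spec_nonneg ((U - (2 * t) *\<^sub>R (b * st b) + (t * t) *\<^sub>R (b * C * st b))
        + (t * t) *\<^sub>R (b * (of_real (norm C) - C) * st b))"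
      by (intro spec_nonneg_add q spec_nonneg_scaleR pc) simp
    thus ?thesis by (simp add: algebra_simps of_real_def scaleR_diff_right)
  qed
  show ?thesis
  proof (cases "norm C = 0")
    case False
    hence c: "norm C > 0" by simp
    define t where "t = 1 / norm C"
    have eq: "U - (2 * t) *\<^sub>R (b * st b) + (t * t * norm C) *\<^sub>R (b * st b) = U - t *\<^sub>R (b * st b)"
      unfolding t_def using c by (simp add: algebra_simps scaleR_2[symmetric])
    have "spec_nonneg (U - t *\<^sub>R (b * st b))" using q2[of t] unfolding eq .
    hence "norm (t *\<^sub>R (b * st b)) \<le> norm U"
      using c unfolding t_def by (intro spec_nonneg_norm_mono spec_nonneg_scaleR spec_nonneg_mult_st_self) simp_all
    thus ?thesis using c nb unfolding t_def by (simp add: divide_le_eq mult.commute)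
  next
    case True
    have "norm (b * st b) = 0"
    proof (rule ccontr)
      assume "norm (b * st b) \<noteq> 0"
      hence nbp: "norm (b * st b) > 0" by simp
      define t where "t = (norm U + 1) / (2 * norm (b * st b))"
      have "spec_nonneg (U - (2 * t) *\<^sub>R (b * st b))" using q2[of t] True by simp
      hence "norm ((2 * t) *\<^sub>R (b * st b)) \<le> norm U"
        using nbp by (intro spec_nonneg_norm_mono spec_nonneg_scaleR spec_nonneg_mult_st_self)
          (simp_all add: t_def)
      moreover have "norm ((2 * t) *\<^sub>R (b * st b)) = norm U + 1" unfolding t_def using nbp by simp
      ultimately show False by simp
    qed
    thus ?thesis using nb True by simp
  qed
qed

lemma norm_sum_mult_st_square_le:
  fixes u c :: "'i \<Rightarrow> 'a"
  shows "(norm (\<Sum>j\<in>F. u j * st (c j)))\<^sup>2 \<le> norm (\<Sum>j\<in>F. u j * st (u j)) * norm (\<Sum>j\<in>F. c j * st (c j))"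
proof (rule norm_square_le_of_quadratic_spec_nonneg)
  let ?U = "\<Sum>j\<in>F. u j * st (u j)" and ?C = "\<Sum>j\<in>F. c j * st (c j)" and ?b = "\<Sum>j\<in>F. u j * st (c j)"
  show "spec_nonneg ?U" "spec_nonneg ?C" by (intro spec_nonneg_sum spec_nonneg_mult_st_self)+
  fix t :: real
  define z where "z j = u j - t *\<^sub>R (?b * c j)" for j
  have stb: "st ?b = (\<Sum>j\<in>F. c j * st (u j))" by (simp add: st_sum st_mult)
  have zz: "z j * st (z j) = u j * st (u j) - t *\<^sub>R (u j * st (c j) * st ?b) - t *\<^sub>R (?b * (c j * st (u j)))
      + (t * t) *\<^sub>R (?b * (c j * st (c j)) * st ?b)" for j
    unfolding z_def by (simp add: st_diff st_scaleR st_mult algebra_simps)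
  have "(\<Sum>j\<in>F. z j * st (z j)) = ?U - t *\<^sub>R ((\<Sum>j\<in>F. u j * st (c j)) * st ?b)
      - t *\<^sub>R (?b * (\<Sum>j\<in>F. c j * st (u j))) + (t * t) *\<^sub>R (?b * (\<Sum>j\<in>F. c j * st (c j)) * st ?b)"
    unfolding zz by (simp add: sum.distrib sum_subtractf scaleR_sum_right sum_distrib_left sum_distrib_right)
  also have "\<dots> = ?U - (2 * t) *\<^sub>R (?b * st ?b) + (t * t) *\<^sub>R (?b * ?C * st ?b)"
    unfolding stb[symmetric] by (simp add: algebra_simps scaleR_2[symmetric])
  finally have eq: "(\<Sum>j\<in>F. z j * st (z j)) = ?U - (2 * t) *\<^sub>R (?b * st ?b) + (t * t) *\<^sub>R (?b * ?C * st ?b)" .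
  have "spec_nonneg (\<Sum>j\<in>F. z j * st (z j))" by (intro spec_nonneg_sum spec_nonneg_mult_st_self)
  thus "spec_nonneg (?U - (2 * t) *\<^sub>R (?b * st ?b) + (t * t) *\<^sub>R (?b * ?C * st ?b))" unfolding eq .
qed

end

section \<open>Hilbert C*-modules\<close>

locale cstar_module = cstar_algebra sc st
  for sc :: "complex \<Rightarrow> 'a::{real_normed_algebra_1,banach} \<Rightarrow> 'a" and st +
  fixes smult :: "'a \<Rightarrow> 'm::ab_group_add \<Rightarrow> 'm"
  assumes left_module: "left_module smult"
begin

lemma smult_one [simp]: "smult 1 x = x"
  using left_module unfolding left_module_def by blast

definition sesquilinear :: "('m \<Rightarrow> 'm \<Rightarrow> 'a) \<Rightarrow> bool" where
  "sesquilinear B \<longleftrightarrow>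
     (\<forall>a x y z. B (smult a x + y) z = a * B x z + B y z) \<and>
     (\<forall>a x y z. B z (smult a x + y) = B z x * st a + B z y)"

lemma sesquilinear_polarization:
  fixes x y :: 'm
  assumes B: "sesquilinear B"
  defines "I \<equiv> of_complex \<i>"
  defines "iy \<equiv> smult I y"
  shows "B x y = (1/2) *\<^sub>R ((B (x + y) (x + y) - B x x - B y y)
           + I * (B (x + iy) (x + iy) - B x x - B iy iy))"
proof -
  have add_left: "B (u + v) z = B u z + B v z" for u v z
    using B smult_one unfolding sesquilinear_def by (metis mult_1)
  have add_right: "B z (u + v) = B z u + B z v" for u v z
    using B smult_one unfolding sesquilinear_def by (metis mult_1_right st_1)
  have "B 0 z = 0" "B z 0 = 0" for z
    using add_left[of 0 0 z] add_right[of z 0 0] by simp_all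
  hence "B (smult a u) z = a * B u z" "B z (smult a u) = B z u * st a" for a u z
    using B unfolding sesquilinear_def by (metis add.right_neutral)+
  hence "B x iy = - (B x y * I)" "B iy x = I * B y x"
    unfolding iy_def I_def by (simp_all add: st_of_complex of_complex_minus)
  hence "I * (B (x + iy) (x + iy) - B x x - B iy iy) = I * (I * B y x) - I * (B x y * I)"
    by (simp add: add_left add_right right_diff_distrib distrib_left)
  also have "\<dots> = B x y - B y x"
    using of_complex_i_squared of_complex_commute unfolding I_def
    by (metis (no_types, lifting) mult.assoc mult_minus1 diff_conv_add_uminus minus_minus add.commute)
  finally have "I * (B (x + iy) (x + iy) - B x x - B iy iy) = B x y - B y x" .
  moreover have "B (x + y) (x + y) - B x x - B y y = B x y + B y x"
    by (simp add: add_left add_right)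
  ultimately show ?thesis by (simp add: scaleR_2[symmetric])
qed

lemma sesquilinear_eqI:
  assumes "sesquilinear B" "sesquilinear C" "\<And>x. B x x = C x x"
  shows "B x y = C x y"
  using sesquilinear_polarization[OF assms(1)] sesquilinear_polarization[OF assms(2)] assms(3) by metis

lemma tendsto_sesquilinear:
  assumes "\<And>n. sesquilinear (B n)" "sesquilinear C" "\<And>x. (\<lambda>n. B n x x) \<longlonglongrightarrow> C x x"
  shows "(\<lambda>n. B n x y) \<longlonglongrightarrow> C x y"
proof -
  let ?I = "of_complex \<i>"
  let ?ix = "smult ?I y"
  have "(\<lambda>n. B n x y) = (\<lambda>n. (1/2) *\<^sub>R ((B n (x + y) (x + y) - B n x x - B n y y)
      + ?I * (B n (x + ?ix) (x + ?ix) - B n x x - B n ?ix ?ix)))"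
    using sesquilinear_polarization[OF assms(1)] by blast
  also have "\<dots> \<longlonglongrightarrow> C x y"
    by (subst sesquilinear_polarization[OF assms(2)]) (intro tendsto_intros assms(3))
  finally show ?thesis .
qed

end

locale inner_product_module = cstar_module sc st smult
  for sc :: "complex \<Rightarrow> 'a::{real_normed_algebra_1,banach} \<Rightarrow> 'a" and st
    and smult :: "'a \<Rightarrow> 'm::ab_group_add \<Rightarrow> 'm" +
  fixes ip :: "'m \<Rightarrow> 'm \<Rightarrow> 'a"
  assumes inner_product: "A_inner_product st smult ip"
begin

lemma ip_smult_add_left: "ip (smult a x + y) z = a * ip x z + ip y z"
  using inner_product unfolding A_inner_product_def by blast

lemma ip_sym: "ip x y = st (ip y x)"
  using inner_product unfolding A_inner_product_def by blast

lemma ip_cpositive: "cpositive st (ip x x)"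
  using inner_product unfolding A_inner_product_def by blast

lemma ip_self_eq_0D: "ip x x = 0 \<Longrightarrow> x = 0"
  using inner_product unfolding A_inner_product_def by blast

lemma ip_add_left: "ip (x + y) z = ip x z + ip y z"
  using ip_smult_add_left[of 1 x y z] by simp

lemma ip_zero_left [simp]: "ip 0 z = 0"
  using ip_add_left[of 0 0 z] by simp

lemma ip_smult_left: "ip (smult a x) z = a * ip x z"
  using ip_smult_add_left[of a x 0 z] by simp

lemma ip_diff_left: "ip (x - y) z = ip x z - ip y z"
  using ip_add_left[of "x - y" y z] by (simp add: algebra_simps)

lemma ip_sum_left: "ip (sum f A) z = (\<Sum>i\<in>A. ip (f i) z)"
  by (induction A rule: infinite_finite_induct) (auto simp: ip_add_left)

lemma ip_add_right: "ip z (x + y) = ip z x + ip z y"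
  by (simp add: ip_sym[of z] ip_add_left st_add)

lemma ip_diff_right: "ip z (x - y) = ip z x - ip z y"
  by (simp add: ip_sym[of z] ip_diff_left st_diff)

lemma ip_smult_right: "ip z (smult a y) = ip z y * st a"
  by (simp add: ip_sym[of z] ip_smult_left st_mult)

lemma sesquilinear_ip: "sesquilinear ip"
  unfolding sesquilinear_def by (simp add: ip_smult_add_left ip_add_right ip_smult_right)

lemma spec_nonneg_ip: "spec_nonneg (ip x x)"
  by (rule cpositive_imp_spec_nonneg[OF ip_cpositive])

lemma norm_ip_square_le: "(norm (ip x y))\<^sup>2 \<le> norm (ip x x) * norm (ip y y)"
proof (rule norm_square_le_of_quadratic_spec_nonneg)
  show "spec_nonneg (ip x x)" "spec_nonneg (ip y y)" by (rule spec_nonneg_ip)+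
  fix t :: real
  let ?b = "ip x y"
  define c where "c = t *\<^sub>R ?b"
  define z where "z = x - smult c y"
  have yx: "ip y x = st ?b" by (rule ip_sym)
  have "ip z z = ip x x - ip x y * st c - c * ip y x + c * ip y y * st c"
    unfolding z_def ip_diff_left ip_diff_right ip_smult_left ip_smult_right
    by (simp add: mult.assoc left_diff_distrib right_diff_distrib)
  also have "\<dots> = ip x x - (2 * t) *\<^sub>R (?b * st ?b) + (t * t) *\<^sub>R (?b * ip y y * st ?b)"
    unfolding yx c_def by (simp add: st_scaleR algebra_simps scaleR_2[symmetric])
  finally show "spec_nonneg (ip x x - (2 * t) *\<^sub>R (?b * st ?b) + (t * t) *\<^sub>R (?b * ip y y * st ?b))"
    using spec_nonneg_ip[of z] by simp
qed

lemma norm_ip_le: "norm (ip x y) \<le> ipnorm ip x * ipnorm ip y"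
proof (rule power2_le_imp_le)
  show "(norm (ip x y))\<^sup>2 \<le> (ipnorm ip x * ipnorm ip y)\<^sup>2"
    using norm_ip_square_le[of x y] by (simp add: ipnorm_def power_mult_distrib)
qed (simp add: ipnorm_def)

lemma ipnorm_minus_commute: "ipnorm ip (x - y) = ipnorm ip (y - x)"
proof -
  have "ip (x - y) (x - y) = ip (y - x) (y - x)"
    by (simp only: ip_diff_left ip_diff_right) (simp add: algebra_simps)
  thus ?thesis by (simp add: ipnorm_def)
qed

definition frame_form :: "nat set \<Rightarrow> (nat \<Rightarrow> 'm) \<Rightarrow> nat \<Rightarrow> 'm \<Rightarrow> 'm \<Rightarrow> 'a" where
  "frame_form J xs n x y = (\<Sum>j\<in>J \<inter> {..<n}. ip x (xs j) * ip (xs j) y)"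

lemma sesquilinear_frame_form: "sesquilinear (frame_form J xs n)"
  unfolding sesquilinear_def frame_form_def
  by (simp add: ip_smult_add_left ip_add_right ip_smult_right distrib_left distrib_right sum.distrib
      sum_distrib_left sum_distrib_right mult.assoc)

lemma frame_form_tendsto:
  assumes "standard_nt_frame ip J xs" shows "(\<lambda>n. frame_form J xs n x y) \<longlonglongrightarrow> ip x y"
proof (rule tendsto_sesquilinear[OF sesquilinear_frame_form sesquilinear_ip])
  show "(\<lambda>n. frame_form J xs n x x) \<longlonglongrightarrow> ip x x" for x
    using assms unfolding standard_nt_frame_def frame_psum_def frame_form_def by simp
qed

lemma norm_frame_sum_le:
  assumes nt: "standard_nt_frame ip J xs" and F: "finite F" "F \<subseteq> J"
  shows "norm (\<Sum>j\<in>F. ip y (xs j) * st (ip y (xs j))) \<le> norm (ip y y)"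
proof (rule spec_nonneg_norm_mono)
  let ?c = "\<lambda>j. ip y (xs j) * st (ip y (xs j))"
  show "spec_nonneg (sum ?c F)" by (intro spec_nonneg_sum spec_nonneg_mult_st_self)
  obtain N where N: "F \<subseteq> {..<N}" using finite_nat_bounded[OF F(1)] by blast
  have "(\<lambda>n. frame_form J xs n y y) \<longlonglongrightarrow> ip y y" by (rule frame_form_tendsto[OF nt])
  hence "(\<lambda>k. frame_form J xs (k + N) y y - sum ?c F) \<longlonglongrightarrow> ip y y - sum ?c F"
    by (intro tendsto_diff tendsto_const LIMSEQ_ignore_initial_segment)
  moreover have "spec_nonneg (frame_form J xs (k + N) y y - sum ?c F)" for k
  proof -
    have "F \<subseteq> J \<inter> {..<k + N}" using N F by auto
    hence "frame_form J xs (k + N) y y - sum ?c F = (\<Sum>j\<in>(J \<inter> {..<k + N}) - F. ?c j)"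
      unfolding frame_form_def ip_sym[of "xs _" y] by (simp add: sum_diff)
    thus ?thesis by (simp add: spec_nonneg_sum spec_nonneg_mult_st_self)
  qed
  ultimately show "spec_nonneg (ip y y - sum ?c F)" by (rule spec_nonneg_limit)
qed

lemma norm_ip_frame_synthesis_le:
  assumes nt: "standard_nt_frame ip J xs" and F: "finite F" "F \<subseteq> J"
    and y: "y = (\<Sum>j\<in>F. smult (u j) (xs j))"
  shows "norm (ip y y) \<le> norm (\<Sum>j\<in>F. u j * st (u j))"
proof -
  have "ip y y = (\<Sum>j\<in>F. u j * ip (xs j) y)"
    by (subst (1) y) (simp add: ip_sum_left ip_smult_left)
  also have "\<dots> = (\<Sum>j\<in>F. u j * st (ip y (xs j)))" by (simp only: ip_sym[of "xs _" y])
  finally have "ip y y = (\<Sum>j\<in>F. u j * st (ip y (xs j)))" .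
  hence "(norm (ip y y))\<^sup>2 \<le> norm (\<Sum>j\<in>F. u j * st (u j)) * norm (\<Sum>j\<in>F. ip y (xs j) * st (ip y (xs j)))"
    using norm_sum_mult_st_square_le by simp
  also have "\<dots> \<le> norm (\<Sum>j\<in>F. u j * st (u j)) * norm (ip y y)"
    by (intro mult_left_mono norm_frame_sum_le[OF nt F]) simp
  finally show ?thesis
    by (cases "ip y y = 0") (auto simp: power2_eq_square mult_le_cancel_right)
qed

lemma frame_partial_sums_cauchy:
  fixes x :: 'm
  assumes nt: "standard_nt_frame ip J xs"
  defines "z \<equiv> \<lambda>n. \<Sum>j\<in>J \<inter> {..<n}. smult (ip x (xs j)) (xs j)"
  shows "\<forall>e>0. \<exists>N. \<forall>m\<ge>N. \<forall>n\<ge>N. ipnorm ip (z m - z n) < e"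
proof (intro allI impI)
  fix e :: real assume e: "e > 0"
  define S where "S n = frame_form J xs n x x" for n
  have "Cauchy S" unfolding S_def using frame_form_tendsto[OF nt] by (rule LIMSEQ_imp_Cauchy)
  then obtain N where N: "\<And>m n. m \<ge> N \<Longrightarrow> n \<ge> N \<Longrightarrow> dist (S m) (S n) < e\<^sup>2"
    unfolding Cauchy_def using e by (meson zero_less_power)
  have bound: "(ipnorm ip (z m - z n))\<^sup>2 < e\<^sup>2" if "m \<ge> N" "n \<ge> N" "n \<le> m" for m n
  proof -
    define F where "F = J \<inter> {n..<m}"
    have split: "J \<inter> {..<m} = (J \<inter> {..<n}) \<union> F" "(J \<inter> {..<n}) \<inter> F = {}"
      using that unfolding F_def by auto
    have "z m - z n = (\<Sum>j\<in>F. smult (ip x (xs j)) (xs j))"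
      unfolding z_def split(1) by (subst sum.union_disjoint) (use split(2) F_def in auto)
    moreover have "S m - S n = (\<Sum>j\<in>F. ip x (xs j) * st (ip x (xs j)))"
      unfolding S_def frame_form_def split(1) ip_sym[of "xs _" x]
      by (subst sum.union_disjoint) (use split(2) F_def in auto)
    ultimately have "norm (ip (z m - z n) (z m - z n)) \<le> norm (S m - S n)"
      using norm_ip_frame_synthesis_le[OF nt, of F] unfolding F_def by simp
    thus ?thesis using N[OF that(1,2)] by (simp add: ipnorm_def dist_norm)
  qed
  show "\<exists>N. \<forall>m\<ge>N. \<forall>n\<ge>N. ipnorm ip (z m - z n) < e"
  proof (intro exI allI impI)
    fix m n assume "m \<ge> N" "n \<ge> N"
    hence "(ipnorm ip (z m - z n))\<^sup>2 < e\<^sup>2"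
      using bound[of m n] bound[of n m] ipnorm_minus_commute[of "z m" "z n"] by (cases "n \<le> m") auto
    thus "ipnorm ip (z m - z n) < e" using e by (simp add: power_less_imp_less_base)
  qed
qed

lemma frame_reconstruction:
  assumes nt: "standard_nt_frame ip J xs" and cp: "ip_complete ip"
  shows "(\<lambda>n. ipnorm ip (x - (\<Sum>j\<in>J \<inter> {..<n}. smult (ip x (xs j)) (xs j)))) \<longlonglongrightarrow> 0"
proof -
  define z where "z n = (\<Sum>j\<in>J \<inter> {..<n}. smult (ip x (xs j)) (xs j))" for n
  obtain l where l: "(\<lambda>n. ipnorm ip (z n - l)) \<longlonglongrightarrow> 0"
    using spec[OF cp[unfolded ip_complete_def], of z] frame_partial_sums_cauchy[OF nt, of x]
    unfolding z_def by blast
  \<comment> \<open>The limit is identified weakly: \<open>\<langle>z n, w\<rangle>\<close> tends both to \<open>\<langle>x, w\<rangle>\<close> and to \<open>\<langle>l, w\<rangle>\<close>.\<close>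
  have "ip x w = ip l w" for w
  proof (rule LIMSEQ_unique)
    have "ip (z n) w = frame_form J xs n x w" for n
      unfolding z_def frame_form_def by (simp add: ip_sum_left ip_smult_left)
    thus "(\<lambda>n. ip (z n) w) \<longlonglongrightarrow> ip x w" using frame_form_tendsto[OF nt] by simp
    have "eventually (\<lambda>n. norm (ip (z n) w - ip l w) \<le> ipnorm ip (z n - l) * ipnorm ip w) sequentially"
      by (intro always_eventually allI) (simp add: norm_ip_le flip: ip_diff_left)
    from Lim_null_comparison[OF this tendsto_mult_left_zero[OF l]]
    show "(\<lambda>n. ip (z n) w) \<longlonglongrightarrow> ip l w" by (simp add: LIM_zero_iff)
  qed
  hence "ip (x - l) (x - l) = 0" by (simp add: ip_diff_left)
  hence "x = l" using ip_self_eq_0D[of "x - l"] by simp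
  hence "ipnorm ip (x - z n) = ipnorm ip (z n - l)" for n using ipnorm_minus_commute by metis
  thus ?thesis using l unfolding z_def by simp
qed

end

lemma inner_product_moduleI:
  fixes smult :: "'a::{real_normed_algebra_1,banach} \<Rightarrow> 'm::ab_group_add \<Rightarrow> 'm"
  assumes "cstar_alg sc st" "left_module smult" "A_inner_product st smult ip"
  shows "inner_product_module sc st smult ip"
  using assms by (simp add: inner_product_module_def inner_product_module_axioms_def
      cstar_module_def cstar_module_axioms_def cstar_algebra_def)

lemma ipnorm_nonneg: "ipnorm p x \<ge> 0"
  by (simp add: ipnorm_def)

lemma ip_complete_if_equiv_norms:
  fixes p q :: "'m::ab_group_add \<Rightarrow> 'm \<Rightarrow> 'a::real_normed_vector"
  assumes cp: "ip_complete p" and eq: "equiv_norms p q"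
  shows "ip_complete q"
  unfolding ip_complete_def
proof (intro allI impI)
  fix f :: "nat \<Rightarrow> 'm"
  assume cq: "\<forall>e>0. \<exists>N. \<forall>m\<ge>N. \<forall>n\<ge>N. ipnorm q (f m - f n) < e"
  obtain c d where cd: "c > 0" "d > 0" "\<And>x. c * ipnorm p x \<le> ipnorm q x" "\<And>x. ipnorm q x \<le> d * ipnorm p x"
    using eq unfolding equiv_norms_def by blast
  have "\<forall>e>0. \<exists>N. \<forall>m\<ge>N. \<forall>n\<ge>N. ipnorm p (f m - f n) < e"
  proof (intro allI impI)
    fix e :: real assume "e > 0"
    then obtain N where N: "\<And>m n. m \<ge> N \<Longrightarrow> n \<ge> N \<Longrightarrow> ipnorm q (f m - f n) < c * e"
      using cq cd(1) by (meson mult_pos_pos)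
    have "ipnorm p (f m - f n) < e" if "m \<ge> N" "n \<ge> N" for m n
    proof -
      have "c * ipnorm p (f m - f n) < c * e" using cd(3)[of "f m - f n"] N[OF that] by linarith
      thus ?thesis using cd(1) by simp
    qed
    thus "\<exists>N. \<forall>m\<ge>N. \<forall>n\<ge>N. ipnorm p (f m - f n) < e" by blast
  qed
  then obtain l where "(\<lambda>n. ipnorm p (f n - l)) \<longlonglongrightarrow> 0" using cp unfolding ip_complete_def by blast
  hence "(\<lambda>n. d * ipnorm p (f n - l)) \<longlonglongrightarrow> 0" by (rule tendsto_mult_right_zero)
  hence "(\<lambda>n. ipnorm q (f n - l)) \<longlonglongrightarrow> 0"
    by (rule Lim_null_comparison[rotated]) (simp add: ipnorm_nonneg cd(4))
  thus "\<exists>l. (\<lambda>n. ipnorm q (f n - l)) \<longlonglongrightarrow> 0" by blast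
qed

lemma equiv_norms_bound:
  assumes "equiv_norms ip p" "equiv_norms ip q"
  obtains K where "\<And>v. ipnorm q v \<le> K * ipnorm p v"
proof -
  obtain c where c: "c > 0" "\<And>x. c * ipnorm ip x \<le> ipnorm p x"
    using assms(1) unfolding equiv_norms_def by blast
  obtain d where d: "d > 0" "\<And>x. ipnorm q x \<le> d * ipnorm ip x"
    using assms(2) unfolding equiv_norms_def by blast
  have "ipnorm q v \<le> (d / c) * ipnorm p v" for v
  proof -
    have "d * ipnorm ip v \<le> d * (ipnorm p v / c)"
      using c d(1) by (intro mult_left_mono) (simp_all add: field_simps)
    thus ?thesis using d(2)[of v] by simp
  qed
  thus ?thesis by (rule that)
qed

lemma frame_form_other_inner_product_tendsto:
  fixes smult :: "'a::{real_normed_algebra_1,banach} \<Rightarrow> 'm::ab_group_add \<Rightarrow> 'm"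
  assumes P: "inner_product_module sc st smult p" and Q: "inner_product_module sc st smult q"
    and nt: "standard_nt_frame p J xs" and cp: "ip_complete p"
    and K: "\<And>v. ipnorm q v \<le> K * ipnorm p v"
  shows "(\<lambda>n. \<Sum>j\<in>J \<inter> {..<n}. p x (xs j) * q (xs j) x) \<longlonglongrightarrow> q x x"
proof -
  interpret P: inner_product_module sc st smult p by (rule P)
  interpret Q: inner_product_module sc st smult q by (rule Q)
  define z where "z n = (\<Sum>j\<in>J \<inter> {..<n}. smult (p x (xs j)) (xs j))" for n
  have qz: "q (z n) x = (\<Sum>j\<in>J \<inter> {..<n}. p x (xs j) * q (xs j) x)" for n
    unfolding z_def by (simp add: Q.ip_sum_left Q.ip_smult_left)
  have "eventually (\<lambda>n. norm (q (z n) x - q x x) \<le> (K * ipnorm p (x - z n)) * ipnorm q x) sequentially"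
  proof (intro always_eventually allI)
    fix n
    have "norm (q (z n) x - q x x) = norm (q (x - z n) x)"
      by (simp add: Q.ip_diff_left norm_minus_commute)
    also have "\<dots> \<le> ipnorm q (x - z n) * ipnorm q x" by (rule Q.norm_ip_le)
    also have "\<dots> \<le> (K * ipnorm p (x - z n)) * ipnorm q x"
      by (intro mult_right_mono K ipnorm_nonneg)
    finally show "norm (q (z n) x - q x x) \<le> (K * ipnorm p (x - z n)) * ipnorm q x" .
  qed
  moreover have "(\<lambda>n. (K * ipnorm p (x - z n)) * ipnorm q x) \<longlonglongrightarrow> 0"
    using tendsto_mult_left_zero[OF tendsto_mult_right_zero[OF P.frame_reconstruction[OF nt cp, of x]]]
    unfolding z_def .
  ultimately have "(\<lambda>n. q (z n) x - q x x) \<longlonglongrightarrow> 0" by (rule Lim_null_comparison)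
  thus ?thesis unfolding qz by (simp add: LIM_zero_iff)
qed

lemma standard_nt_frame_same_diagonal:
  fixes smult :: "'a::{real_normed_algebra_1,banach} \<Rightarrow> 'm::ab_group_add \<Rightarrow> 'm"
  assumes P: "inner_product_module sc st smult p" and Q: "inner_product_module sc st smult q"
    and nt: "standard_nt_frame p J xs" "standard_nt_frame q J xs"
    and cp: "ip_complete p" "ip_complete q"
    and K: "\<And>v. ipnorm q v \<le> K * ipnorm p v" and L: "\<And>v. ipnorm p v \<le> L * ipnorm q v"
  shows "p x x = q x x"
proof -
  interpret P: inner_product_module sc st smult p by (rule P)
  interpret Q: inner_product_module sc st smult q by (rule Q)
  have "(\<lambda>n. st (\<Sum>j\<in>J \<inter> {..<n}. q x (xs j) * p (xs j) x)) \<longlonglongrightarrow> st (p x x)"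
    by (rule bounded_linear.tendsto[OF P.bounded_linear_st frame_form_other_inner_product_tendsto[OF Q P nt(2) cp(2) L]])
  moreover have "st (\<Sum>j\<in>J \<inter> {..<n}. q x (xs j) * p (xs j) x) = (\<Sum>j\<in>J \<inter> {..<n}. p x (xs j) * q (xs j) x)" for n
    by (simp add: P.st_sum P.st_mult P.ip_sym[of x] Q.ip_sym[of x])
  moreover have "st (p x x) = p x x" using P.ip_sym[of x x] by simp
  ultimately have "(\<lambda>n. \<Sum>j\<in>J \<inter> {..<n}. p x (xs j) * q (xs j) x) \<longlonglongrightarrow> p x x" by simp
  thus ?thesis using frame_form_other_inner_product_tendsto[OF P Q nt(1) cp(1) K] by (rule LIMSEQ_unique)
qed

theorem corollary4p3:
  fixes sc :: "complex \<Rightarrow> 'a::{real_normed_algebra_1,banach} \<Rightarrow> 'a"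
    and st :: "'a \<Rightarrow> 'a"
    and smult :: "'a \<Rightarrow> 'm::ab_group_add \<Rightarrow> 'm"
    and ip ip1 ip2 :: "'m \<Rightarrow> 'm \<Rightarrow> 'a"
    and J :: "nat set" and xs :: "nat \<Rightarrow> 'm"
  assumes "hilbert_module sc st smult ip"
    and "finitely_generated smult \<or> countably_generated smult ip"
    and "standard_frame st ip J xs"
    and "A_inner_product st smult ip1" and "equiv_norms ip ip1"
    and "A_inner_product st smult ip2" and "equiv_norms ip ip2"
    and "standard_nt_frame ip1 J xs"
    and "standard_nt_frame ip2 J xs"
  shows "\<forall>x y. ip1 x y = ip2 x y"
proof -
  have csa: "cstar_alg sc st" and lm: "left_module smult" and cp: "ip_complete ip"
    using assms(1) unfolding hilbert_module_def by auto
  have I1: "inner_product_module sc st smult ip1" by (rule inner_product_moduleI[OF csa lm assms(4)])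
  have I2: "inner_product_module sc st smult ip2" by (rule inner_product_moduleI[OF csa lm assms(6)])
  interpret I1: inner_product_module sc st smult ip1 by (rule I1)
  obtain K where K: "\<And>v. ipnorm ip2 v \<le> K * ipnorm ip1 v"
    using equiv_norms_bound[OF assms(5,7)] by blast
  obtain L where L: "\<And>v. ipnorm ip1 v \<le> L * ipnorm ip2 v"
    using equiv_norms_bound[OF assms(7,5)] by blast
  have "ip1 x x = ip2 x x" for x
    using standard_nt_frame_same_diagonal[OF I1 I2 assms(8,9) _ _ K L]
      ip_complete_if_equiv_norms[OF cp assms(5)] ip_complete_if_equiv_norms[OF cp assms(7)] by blast
  thus ?thesis
    using I1.sesquilinear_eqI[OF I1.sesquilinear_ip inner_product_module.sesquilinear_ip[OF I2]] by blast
qed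

end
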